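(* Under the assumptions of the context, the linear program $\mathbf L_H^{\mathcal X,\infty,\mathcal T}$ has a finite optimal value $\Psi^{\mathcal X,\infty,\mathcal T}(a,\mathbf C)$, attained by an optimal solution. For every feasible point of $\mathbf L_H^{\mathcal X,\infty,\mathcal T}$, the semi-static strategy which holds, for each $n$, the claim paying $\bar e^1_n(X_{t_n})+\bar e^2_n(X_{t_n})$ at $t_n$, additionally holds the claim paying $\bar v_N(X_{t_N})$ at $t_N$, and holds $\tilde d^1_n(X_{t_n})$ shares over $[t_n,t_{n+1}]$ before exercise and $\tilde d^2_n(X_{t_n})$ shares from the exercise date on, super-replicates the American claim for all exercise dates in $\mathcal T$ and along all non-negative price paths; its cost is the objective value. Consequently \[ \inf_{\mathcal S^{\mathbb R^+,\mathcal T}(a)}H\le\Psi^{\mathcal X,\infty,\mathcal T}(a,\mathbf C). \]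
   Context: Fix $N\ge1$, $J\ge1$, times $0=t_0<t_1<\dots<t_N=T$, $\mathcal T=\{t_1,\dots,t_N\}$, $s_0>0$, strikes $0=x_0<x_1<\dots<x_J$ (discounted prices, zero interest). Call prices $c_{j,n}$ (payoff $(X_{t_n}-x_j)^+$ at $t_n$, $c_{0,n}=s_0$) satisfy: $s_0=c_{0,n}>c_{1,n}>\dots>c_{J,n}>0$; $1>\frac{c_{0,n}-c_{1,n}}{x_1}>\frac{c_{1,n}-c_{2,n}}{x_2-x_1}>\dots>\frac{c_{J-1,n}-c_{J,n}}{x_J-x_{J-1}}>0$; $c_{j,n+1}>c_{j,n}$ for $1\le j\le J$, $1\le n\le N-1$. Let $\hat p_{0,n}=1-\frac{s_0-c_{1,n}}{x_1}$, $\hat p_{j,n}=\frac{c_{j-1,n}-c_{j,n}}{x_j-x_{j-1}}-\frac{c_{j,n}-c_{j+1,n}}{x_{j+1}-x_j}$ ($1\le j<J$), $\hat p_{J,n}=\frac{c_{J-1,n}-c_{J,n}}{x_J-x_{J-1}}$, $\hat p_{J+1,n}=c_{J,n}$. The payoff $a:[0,\infty)\times\mathcal T\to[0,\infty)$ is convex in its first argument with $\ell_n:=\lim_{x\uparrow\infty}a(x,t_n)/x<R<\infty$. $\mathbf L_H^{\mathcal X,\infty,\mathcal T}$: over reals $e^1_{j,n},e^2_{j,n},v_{j,n}$ ($0\le j\le J+1$, $1\le n\le N$), $d^1_{j,n},d^2_{j,n}$ ($1\le n\le N-1$), with $e^1_{j,N}=e^2_{j,1}=0$, minimise $\sum_n\sum_{j=0}^{J+1}(e^1_{j,n}+e^2_{j,n})\hat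 p_{j,n}+\sum_{j=0}^{J+1}v_{j,N}\hat p_{j,N}$ subject to $v_{j,n}\ge0$ and: (i) $v_{j,n}\ge a(x_j,t_n)$ ($0\le j\le J$), $v_{J+1,n}\ge\ell_n$; (ii) $e^1_{j,n}+e^2_{k,n+1}+(x_k-x_j)d^1_{j,n}\ge0$ ($0\le j,k\le J$), $e^1_{J+1,n}-d^1_{J+1,n}\ge0$, $e^2_{J+1,n+1}+d^1_{j,n}\ge0$ ($0\le j\le J$), $e^1_{J+1,n}+e^2_{J+1,n+1}\ge0$; (iii) $e^1_{j,n}+e^2_{k,n+1}+(x_k-x_j)d^2_{j,n}-v_{j,n}+v_{k,n+1}\ge0$ ($0\le j,k\le J$), $e^1_{J+1,n}-d^2_{J+1,n}-v_{J+1,n}\ge0$, $e^2_{J+1,n+1}+d^2_{j,n}+v_{J+1,n+1}\ge0$ ($0\le j\le J$), $e^1_{J+1,n}+e^2_{J+1,n+1}-v_{J+1,n}+v_{J+1,n+1}\ge0$ (with $1\le n\le N$ in (i), $1\le n\le N-1$ in (ii),(iii)). Extended linear interpolation of $(h_0,\dots,h_{J+1})$: $\bar h(x)=\frac{x_{j+1}-x}{x_{j+1}-x_j}h_j+\frac{x-x_j}{x_{j+1}-x_j}h_{j+1}$ on $[x_j,x_{j+1}]$, $j<J$, and $\bar h(x)=h_J+(x-x_J)h_{J+1}$ for $x\ge x_J$; the claim paying $\bar h(X_{t_n})$ at $t_n$ is a portfolio of bond, stock and calls of maturity $t_n$. Mixed interpolation: with $u^1_{j,n}=\frac{e^1_{j+1,n}-e^1_{j,n}}{x_{j+1}-x_j}$,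 $u^2_{j,n}=\frac{(e^1_{j+1,n}-v_{j+1,n})-(e^1_{j,n}-v_{j,n})}{x_{j+1}-x_j}$: $\tilde d^\delta_n(x_j)=d^\delta_{j,n}$; on $(x_j,x_{j+1})$, $\tilde d^\delta_n=d^\delta_{j,n}$ if $d^\delta_{j,n}\le u^\delta_{j,n}$, $=d^\delta_{j+1,n}$ if $d^\delta_{j,n}>u^\delta_{j,n}\le d^\delta_{j+1,n}$, $=u^\delta_{j,n}$ if $d^\delta_{j+1,n}<u^\delta_{j,n}<d^\delta_{j,n}$; for $x>x_J$, $\tilde d^1_n(x)=\min\{d^1_{J,n},e^1_{J+1,n}\}$, $\tilde d^2_n(x)=\min\{d^2_{J,n},e^1_{J+1,n}-v_{J+1,n}\}$. $\mathcal S^{\mathbb R^+,\mathcal T}(a)$: semi-static strategies (static portfolio of bonds, stock and traded calls with cost $H$ computed from the call prices; bounded stock holdings at times $t_n$, $1\le n\le N-1$, depending on the path so far and, after exercise, on the exercise time) whose terminal payoff is $\ge a(x_\rho,\rho)$ for all paths in $[0,\infty)^N$ and all exercise times $\rho\in\mathcal T$. *)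

theory Defs
  imports "HOL-Analysis.Analysis"
begin

text \<open>Time points are indexed by n = 1..N (index n stands for t_n);
strikes by j = 0..J with x 0 = 0; call prices c j n (payoff (X_{t_n} - x_j)^+ at t_n);
the payoff a(y, t_n) is written a y n. Paths are functions w :: nat => real, where
w n is the (discounted) price at t_n, n = 1..N; exercise times are indices rho in 1..N.\<close>

definition phat :: "nat \<Rightarrow> (nat \<Rightarrow> real) \<Rightarrow> real \<Rightarrow> (nat \<Rightarrow> nat \<Rightarrow> real) \<Rightarrow> nat \<Rightarrow> nat \<Rightarrow> real" where
  "phat J x s0 c j n =
     (if j = 0 then 1 - (s0 - c 1 n) / x 1
      else if j < J then (c (j-1) n - c j n) / (x j - x (j-1)) - (c j n - c (j+1) n) / (x (j+1) - x j)
      else if j = J then (c (J-1) n - c J n) / (x J - x (J-1))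
      else if j = J + 1 then c J n
      else 0)"

record lp_point =
  e1 :: "nat \<Rightarrow> nat \<Rightarrow> real"
  e2 :: "nat \<Rightarrow> nat \<Rightarrow> real"
  v  :: "nat \<Rightarrow> nat \<Rightarrow> real"
  d1 :: "nat \<Rightarrow> nat \<Rightarrow> real"
  d2 :: "nat \<Rightarrow> nat \<Rightarrow> real"

definition lp_objective :: "nat \<Rightarrow> nat \<Rightarrow> (nat \<Rightarrow> real) \<Rightarrow> real \<Rightarrow> (nat \<Rightarrow> nat \<Rightarrow> real) \<Rightarrow> lp_point \<Rightarrow> real" where
  "lp_objective N J x s0 c z =
     (\<Sum>n = 1..N. \<Sum>j = 0..J+1. (e1 z j n + e2 z j n) * phat J x s0 c j n)
     + (\<Sum>j = 0..J+1. v z j N * phat J x s0 c j N)"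

definition lp_feasible :: "nat \<Rightarrow> nat \<Rightarrow> (nat \<Rightarrow> real) \<Rightarrow> (real \<Rightarrow> nat \<Rightarrow> real) \<Rightarrow> (nat \<Rightarrow> real) \<Rightarrow> lp_point \<Rightarrow> bool" where
  "lp_feasible N J x a ell z \<longleftrightarrow>
     (\<forall>j \<le> J+1. e1 z j N = 0 \<and> e2 z j 1 = 0) \<and>
     (\<forall>n \<in> {1..N}. \<forall>j \<le> J+1. v z j n \<ge> 0) \<and>
     \<comment> \<open>(i)\<close>
     (\<forall>n \<in> {1..N}. (\<forall>j \<le> J. v z j n \<ge> a (x j) n) \<and> v z (J+1) n \<ge> ell n) \<and>
     \<comment> \<open>(ii)\<close>
     (\<forall>n \<in> {1..<N}.
        (\<forall>j \<le> J. \<forall>k \<le> J. e1 z j n + e2 z k (n+1) + (x k - x j) * d1 z j n \<ge> 0) \<and>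
        e1 z (J+1) n - d1 z (J+1) n \<ge> 0 \<and>
        (\<forall>j \<le> J. e2 z (J+1) (n+1) + d1 z j n \<ge> 0) \<and>
        e1 z (J+1) n + e2 z (J+1) (n+1) \<ge> 0) \<and>
     \<comment> \<open>(iii)\<close>
     (\<forall>n \<in> {1..<N}.
        (\<forall>j \<le> J. \<forall>k \<le> J. e1 z j n + e2 z k (n+1) + (x k - x j) * d2 z j n - v z j n + v z k (n+1) \<ge> 0) \<and>
        e1 z (J+1) n - d2 z (J+1) n - v z (J+1) n \<ge> 0 \<and>
        (\<forall>j \<le> J. e2 z (J+1) (n+1) + d2 z j n + v z (J+1) (n+1) \<ge> 0) \<and>
        e1 z (J+1) n + e2 z (J+1) (n+1) - v z (J+1) n + v z (J+1) (n+1) \<ge> 0)"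

definition lp_value :: "nat \<Rightarrow> nat \<Rightarrow> (nat \<Rightarrow> real) \<Rightarrow> real \<Rightarrow> (nat \<Rightarrow> nat \<Rightarrow> real) \<Rightarrow> (real \<Rightarrow> nat \<Rightarrow> real) \<Rightarrow> (nat \<Rightarrow> real) \<Rightarrow> real" where
  "lp_value N J x s0 c a ell = Inf (lp_objective N J x s0 c ` {z. lp_feasible N J x a ell z})"

definition ext_interp :: "nat \<Rightarrow> (nat \<Rightarrow> real) \<Rightarrow> (nat \<Rightarrow> real) \<Rightarrow> real \<Rightarrow> real" where
  "ext_interp J x h y =
     (if x J \<le> y then h J + (y - x J) * h (J+1)
      else (let j = (GREATEST j. j < J \<and> x j \<le> y) in
              (x (j+1) - y) / (x (j+1) - x j) * h j + (y - x j) / (x (j+1) - x j) * h (j+1)))"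

definition mixed_interp :: "nat \<Rightarrow> (nat \<Rightarrow> real) \<Rightarrow> (nat \<Rightarrow> real) \<Rightarrow> (nat \<Rightarrow> real) \<Rightarrow> real \<Rightarrow> real \<Rightarrow> real" where
  "mixed_interp J x d u dinf y =
     (if \<exists>j \<le> J. y = x j then d (THE j. j \<le> J \<and> y = x j)
      else if x J < y then dinf
      else (let j = (GREATEST j. j < J \<and> x j \<le> y) in
              if d j \<le> u j then d j
              else if u j \<le> d (j+1) then d (j+1)
              else u j))"

definition u1 :: "(nat \<Rightarrow> real) \<Rightarrow> lp_point \<Rightarrow> nat \<Rightarrow> nat \<Rightarrow> real" where
  "u1 x z n j = (e1 z (j+1) n - e1 z j n) / (x (j+1) - x j)"

definition u2 :: "(nat \<Rightarrow> real) \<Rightarrow> lp_point \<Rightarrow> nat \<Rightarrow> nat \<Rightarrow> real" where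
  "u2 x z n j = ((e1 z (j+1) n - v z (j+1) n) - (e1 z j n - v z j n)) / (x (j+1) - x j)"

definition dtilde1 :: "nat \<Rightarrow> (nat \<Rightarrow> real) \<Rightarrow> lp_point \<Rightarrow> nat \<Rightarrow> real \<Rightarrow> real" where
  "dtilde1 J x z n = mixed_interp J x (\<lambda>j. d1 z j n) (u1 x z n) (min (d1 z J n) (e1 z (J+1) n))"

definition dtilde2 :: "nat \<Rightarrow> (nat \<Rightarrow> real) \<Rightarrow> lp_point \<Rightarrow> nat \<Rightarrow> real \<Rightarrow> real" where
  "dtilde2 J x z n = mixed_interp J x (\<lambda>j. d2 z j n) (u2 x z n) (min (d2 z J n) (e1 z (J+1) n - v z (J+1) n))"

text \<open>Static part: bond, stock (held to T) and calls cll j n (strike x j, maturity t_n,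
j = 0..J, n = 1..N; the strike-0 call has price s0); dynamic part: stock holding
dlt n w rho over [t_n, t_(n+1)], n = 1..N-1, given path w and exercise index rho.
All cash flows are accumulated (zero interest) to T.\<close>
record strategy =
  bnd :: real
  stk :: real
  cll :: "nat \<Rightarrow> nat \<Rightarrow> real"
  dlt :: "nat \<Rightarrow> (nat \<Rightarrow> real) \<Rightarrow> nat \<Rightarrow> real"

definition nonneg_path :: "nat \<Rightarrow> (nat \<Rightarrow> real) \<Rightarrow> bool" where
  "nonneg_path N w \<longleftrightarrow> (\<forall>n \<in> {1..N}. 0 \<le> w n)"

definition static_payoff :: "nat \<Rightarrow> nat \<Rightarrow> (nat \<Rightarrow> real) \<Rightarrow> strategy \<Rightarrow> (nat \<Rightarrow> real) \<Rightarrow> real" where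
  "static_payoff N J x s w =
     bnd s + stk s * w N + (\<Sum>n = 1..N. \<Sum>j = 0..J. cll s j n * max (w n - x j) 0)"

definition cost :: "nat \<Rightarrow> nat \<Rightarrow> real \<Rightarrow> (nat \<Rightarrow> nat \<Rightarrow> real) \<Rightarrow> strategy \<Rightarrow> real" where
  "cost N J s0 c s = bnd s + stk s * s0 + (\<Sum>n = 1..N. \<Sum>j = 0..J. cll s j n * c j n)"

definition gains :: "nat \<Rightarrow> strategy \<Rightarrow> (nat \<Rightarrow> real) \<Rightarrow> nat \<Rightarrow> real" where
  "gains N s w rho = (\<Sum>n \<in> {1..<N}. dlt s n w rho * (w (n+1) - w n))"

text \<open>Admissibility of the dynamic part: at t_n the holding depends only on
w 1, ..., w n and, after exercise (rho \<le> n), on the exercise index; before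
exercise only on the fact that rho > n.\<close>
definition admissible_delta :: "nat \<Rightarrow> strategy \<Rightarrow> bool" where
  "admissible_delta N s \<longleftrightarrow>
     (\<forall>n \<in> {1..<N}. \<forall>w w' rho rho'.
        nonneg_path N w \<longrightarrow> nonneg_path N w' \<longrightarrow> rho \<in> {1..N} \<longrightarrow> rho' \<in> {1..N} \<longrightarrow>
        (\<forall>k \<in> {1..n}. w k = w' k) \<longrightarrow>
        (if rho \<le> n then rho' = rho else n < rho') \<longrightarrow>
        dlt s n w rho = dlt s n w' rho') \<and>
     (\<exists>B. \<forall>n \<in> {1..<N}. \<forall>w rho. nonneg_path N w \<longrightarrow> rho \<in> {1..N} \<longrightarrow> \<bar>dlt s n w rho\<bar> \<le> B)"

definition superhedges :: "nat \<Rightarrow> nat \<Rightarrow> (nat \<Rightarrow> real) \<Rightarrow> (real \<Rightarrow> nat \<Rightarrow> real) \<Rightarrow> strategy set" where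
  "superhedges N J x a =
     {s. admissible_delta N s \<and>
         (\<forall>w rho. nonneg_path N w \<longrightarrow> rho \<in> {1..N} \<longrightarrow>
            static_payoff N J x s w + gains N s w rho \<ge> a (w rho) rho)}"

end

theory Submission
  imports Defs "HOL-Library.Function_Algebras"
begin

text \<open>A feasible point of the linear program is turned into a semi-static strategy. Its static
  part replicates with bonds and calls the piecewise linear claims interpolating \<open>e1 + e2\<close> at each
  date and \<open>v\<close> at maturity, so it costs exactly the objective value. Constraints (ii) say that,
  with the stock holding interpolated between the strikes by the mixed interpolation, no single
  period before exercise can lose money; constraints (iii) say the same after exercise while the
  interpolation of \<open>v\<close> is carried from one date to the next. Summing over the periods, the
  strategy dominates the interpolation of \<open>v\<close> at the exercise date, and this dominates the convex
  payoff by (i).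

  The objective is nonnegative on feasible points: in each period (ii) produces a convex claim
  between \<open>- e1\<close> and \<open>e2\<close>, whose price increases with maturity because call prices do. A feasible
  linear program that is bounded below attains its minimum, which is the optimal value.\<close>

section \<open>Strike grids and interpolation\<close>

locale strike_grid =
  fixes J :: nat and x :: "nat \<Rightarrow> real"
  assumes x_0: "x 0 = 0" and x_step: "\<forall>j<J. x j < x (j+1)"
begin

lemma x_less: "i < k \<Longrightarrow> k \<le> J \<Longrightarrow> x i < x k"
proof (induction k)
  case (Suc k)
  have "x k < x (Suc k)"
    using x_step Suc.prems by simp
  then show ?case
    using Suc by (cases "i < k") (auto simp: less_Suc_eq)
qed simp

lemma x_le: "i \<le> k \<Longrightarrow> k \<le> J \<Longrightarrow> x i \<le> x k"
  using x_less[of i k] by (cases "i = k") auto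

lemma x_nonneg: "j \<le> J \<Longrightarrow> 0 \<le> x j"
  using x_le[of 0 j] x_0 by simp

lemma x_inj: "i \<le> J \<Longrightarrow> k \<le> J \<Longrightarrow> x i = x k \<Longrightarrow> i = k"
  using x_less[of i k] x_less[of k i] by (cases i k rule: linorder_cases) auto

lemma segment_length_pos: "j < J \<Longrightarrow> 0 < x (j+1) - x j"
  using x_step by simp

lemma Greatest_segment_eq:
  assumes "i < J" "x i \<le> y" "y < x (i+1)"
  shows "(GREATEST j. j < J \<and> x j \<le> y) = i"
proof (rule Greatest_equality)
  fix j assume j: "j < J \<and> x j \<le> y"
  show "j \<le> i"
  proof (rule ccontr)
    assume "\<not> j \<le> i"
    then have "x (i+1) \<le> x j"
      using x_le[of "i+1" j] j by auto
    then show False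
      using j assms(3) by auto
  qed
qed (use assms in auto)

lemma segment_exists:
  assumes "0 \<le> y" "y < x J"
  obtains i where "i < J" "x i \<le> y" "y < x (i+1)"
proof -
  define P where "P j \<longleftrightarrow> j < J \<and> x j \<le> y" for j
  have "P 0"
    using assms x_0 by (cases J) (auto simp: P_def)
  then have i: "P (Greatest P)" and i_max: "\<And>j. P j \<Longrightarrow> j \<le> Greatest P"
    using GreatestI_nat[of P 0 J] Greatest_le_nat[of P _ J] by (auto simp: P_def)
  have "y < x (Greatest P + 1)"
  proof (rule ccontr)
    assume above: "\<not> y < x (Greatest P + 1)"
    then have "P (Greatest P + 1) \<or> Greatest P + 1 = J"
      using i by (auto simp: P_def)
    then show False
      using i_max[of "Greatest P + 1"] assms(2) above by auto
  qed
  then show ?thesis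
    using that i by (auto simp: P_def)
qed

lemma position_cases:
  assumes "0 \<le> y"
  obtains (node) j where "j \<le> J" "y = x j"
    | (right) "x J < y"
    | (segment) i where "i < J" "x i < y" "y < x (i+1)"
proof (cases "x J < y")
  case False
  show ?thesis
  proof (cases "\<exists>j\<le>J. y = x j")
    case False
    with \<open>\<not> x J < y\<close> have "y < x J" by auto
    then obtain i where i: "i < J" "x i \<le> y" "y < x (i+1)"
      using segment_exists assms by blast
    moreover have "y \<noteq> x i"
      using False i(1) by auto
    ultimately show ?thesis
      using segment by auto
  qed (use node in blast)
qed (rule right)

end

lemma ext_interp_right: "x J \<le> y \<Longrightarrow> ext_interp J x h y = h J + (y - x J) * h (J+1)"
  unfolding ext_interp_def by simp

lemma ext_interp_as_combination:
  obtains i \<alpha> \<beta> \<gamma> where "\<And>h. ext_interp J x h y = \<alpha> * h i + \<beta> * h (i+1) + \<gamma> * h (J+1)"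
proof (cases "x J \<le> y")
  case True
  show ?thesis
    by (rule that[of 1 J 0 "y - x J"]) (simp add: ext_interp_right[of x J y, OF True])
next
  case False
  define i where "i = (GREATEST j. j < J \<and> x j \<le> y)"
  show ?thesis
    by (rule that[of "(x (i+1) - y) / (x (i+1) - x i)" i "(y - x i) / (x (i+1) - x i)" 0])
      (simp add: ext_interp_def False Let_def i_def)
qed

lemma ext_interp_add:
  "ext_interp J x (\<lambda>j. h j + k j) y = ext_interp J x h y + ext_interp J x k y"
  by (rule ext_interp_as_combination[of J x y]) (simp add: algebra_simps)

lemma ext_interp_diff:
  "ext_interp J x (\<lambda>j. h j - k j) y = ext_interp J x h y - ext_interp J x k y"
  by (rule ext_interp_as_combination[of J x y]) (simp add: algebra_simps)

context strike_grid
begin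

lemma ext_interp_segment:
  assumes "i < J" "x i \<le> y" "y < x (i+1)"
  shows "ext_interp J x h y = h i + (h (i+1) - h i) / (x (i+1) - x i) * (y - x i)"
proof -
  have "\<not> x J \<le> y"
    using x_le[of "i+1" J] assms by auto
  then have "ext_interp J x h y =
      (x (i+1) - y) / (x (i+1) - x i) * h i + (y - x i) / (x (i+1) - x i) * h (i+1)"
    unfolding ext_interp_def Greatest_segment_eq[OF assms] by simp
  also have "\<dots> = h i + (h (i+1) - h i) / (x (i+1) - x i) * (y - x i)"
    using segment_length_pos[OF assms(1)] by (simp add: divide_simps) (simp add: algebra_simps)
  finally show ?thesis .
qed

lemma ext_interp_node:
  assumes "j \<le> J"
  shows "ext_interp J x h (x j) = h j"
proof (cases "j = J")
  case False
  then have "j < J"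
    using assms by simp
  then show ?thesis
    using ext_interp_segment[of j "x j" h] segment_length_pos by simp
qed (simp add: ext_interp_right)

lemma ext_interp_zero:
  assumes "0 \<le> y" and h: "\<forall>j\<le>J+1. h j = 0"
  shows "ext_interp J x h y = 0"
proof (cases "x J \<le> y")
  case True
  then show ?thesis
    using h by (simp add: ext_interp_right)
next
  case False
  then have "y < x J"
    by simp
  then obtain i where i: "i < J" "x i \<le> y" "y < x (i+1)"
    using segment_exists assms(1) by blast
  then show ?thesis
    using h ext_interp_segment[OF i, of h] by simp
qed

lemma mixed_interp_node:
  assumes "j \<le> J"
  shows "mixed_interp J x d u dinf (x j) = d j"
proof -
  have "(THE i. i \<le> J \<and> x j = x i) = j"
    using x_inj assms by (intro the_equality) auto
  then show ?thesis
    using assms unfolding mixed_interp_def by auto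
qed

lemma mixed_interp_right:
  assumes "x J < y"
  shows "mixed_interp J x d u dinf y = dinf"
proof -
  have "\<not> (\<exists>j\<le>J. y = x j)"
    using x_le[of _ J] assms by fastforce
  then show ?thesis
    using assms unfolding mixed_interp_def by auto
qed

lemma mixed_interp_segment:
  assumes "i < J" "x i < y" "y < x (i+1)"
  shows "mixed_interp J x d u dinf y =
    (if d i \<le> u i then d i else if u i \<le> d (i+1) then d (i+1) else u i)"
proof -
  have "y \<noteq> x j" if "j \<le> J" for j
    using x_le[of j i] x_le[of "i+1" j] assms that by (cases "j \<le> i") auto
  moreover have "\<not> x J < y"
    using x_le[of "i+1" J] assms by auto
  ultimately show ?thesis
    unfolding mixed_interp_def Greatest_segment_eq[OF assms(1) less_imp_le[OF assms(2)] assms(3)]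
    by auto
qed

end

section \<open>Static replication by calls\<close>

definition segment_slope :: "nat \<Rightarrow> (nat \<Rightarrow> real) \<Rightarrow> (nat \<Rightarrow> real) \<Rightarrow> nat \<Rightarrow> real" where
  "segment_slope J x h j = (if j < J then (h (j+1) - h j) / (x (j+1) - x j) else h (J+1))"

text \<open>The claim paying the extended interpolation of \<open>h\<close> is replicated by \<open>h 0\<close> bonds and
  \<open>call_units J x h j\<close> calls of strike \<open>x j\<close>, the strike-0 call being the stock.\<close>
definition call_units :: "nat \<Rightarrow> (nat \<Rightarrow> real) \<Rightarrow> (nat \<Rightarrow> real) \<Rightarrow> nat \<Rightarrow> real" where
  "call_units J x h j =
     (if j = 0 then segment_slope J x h 0 else segment_slope J x h j - segment_slope J x h (j-1))"

lemma sum_call_units: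
  fixes C :: "nat \<Rightarrow> real"
  shows "(\<Sum>j=0..J. call_units J x h j * C j) =
    (\<Sum>j<J. segment_slope J x h j * (C j - C (j+1))) + h (J+1) * C J"
proof -
  have "(\<Sum>j=0..K. (if j = 0 then s 0 else s j - s (j-1)) * C j) =
      (\<Sum>j<K. s j * (C j - C (j+1))) + s K * C K" for s :: "nat \<Rightarrow> real" and K
    by (induction K) (simp_all add: sum.atLeast0_atMost_Suc algebra_simps)
  from this[of "segment_slope J x h" J] show ?thesis
    unfolding call_units_def by (simp add: segment_slope_def)
qed

lemma sum_by_parts:
  fixes h A :: "nat \<Rightarrow> real"
  shows "(\<Sum>j=0..J. h j * (A j - A (j+1))) =
    h 0 * A 0 - h J * A (J+1) + (\<Sum>j<J. (h (j+1) - h j) * A (j+1))"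
  by (induction J) (simp_all add: sum.atLeast0_atMost_Suc algebra_simps)

context strike_grid
begin

lemma call_spread_segment:
  assumes "j < J"
  shows "segment_slope J x h j * (max (y - x j) 0 - max (y - x (j+1)) 0) =
    (if x (j+1) \<le> y then h (j+1) - h j
     else if x j \<le> y then segment_slope J x h j * (y - x j) else 0)"
  using segment_length_pos[OF assms] assms by (auto simp: segment_slope_def)

lemma ext_interp_call_portfolio:
  assumes "0 \<le> y"
  shows "ext_interp J x h y = h 0 + (\<Sum>j=0..J. call_units J x h j * max (y - x j) 0)"
proof (cases "x J \<le> y")
  case True
  have "(\<Sum>j<J. segment_slope J x h j * (max (y - x j) 0 - max (y - x (j+1)) 0)) =
      (\<Sum>j<J. h (Suc j) - h j)"
  proof (rule sum.cong)
    fix j assume "j \<in> {..<J}"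
    then show "segment_slope J x h j * (max (y - x j) 0 - max (y - x (j+1)) 0) = h (Suc j) - h j"
      using call_spread_segment[of j h y] x_le[of "j+1" J] True by simp
  qed simp
  also have "\<dots> = h J - h 0"
    by (rule sum_lessThan_telescope)
  finally show ?thesis
    using True by (simp add: sum_call_units ext_interp_right)
next
  case False
  then have "y < x J"
    by simp
  then obtain i where i: "i < J" "x i \<le> y" "y < x (i+1)"
    using segment_exists assms by blast
  have "(\<Sum>j<J. segment_slope J x h j * (max (y - x j) 0 - max (y - x (j+1)) 0)) =
      (\<Sum>j<Suc i. if j < i then h (Suc j) - h j else segment_slope J x h i * (y - x i))"
  proof (rule sum.mono_neutral_cong_right; (intro ballI)?)
    fix j assume "j \<in> {..<J} - {..<Suc i}"
    then show "segment_slope J x h j * (max (y - x j) 0 - max (y - x (j+1)) 0) = 0"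
      using x_le[of "i+1" j] x_le[of "i+1" "j+1"] i by auto
  next
    fix j assume "j \<in> {..<Suc i}"
    then show "segment_slope J x h j * (max (y - x j) 0 - max (y - x (j+1)) 0) =
        (if j < i then h (Suc j) - h j else segment_slope J x h i * (y - x i))"
      using call_spread_segment[of j h y] x_le[of "j+1" i] x_le[of j i] i
      by (cases "j = i") auto
  qed (use i in auto)
  also have "\<dots> = h i - h 0 + segment_slope J x h i * (y - x i)"
    by (simp add: sum_lessThan_telescope)
  finally show ?thesis
    using i False by (simp add: sum_call_units ext_interp_segment segment_slope_def)
qed

end

definition claim_price ::
    "nat \<Rightarrow> (nat \<Rightarrow> real) \<Rightarrow> real \<Rightarrow> (nat \<Rightarrow> nat \<Rightarrow> real) \<Rightarrow> nat \<Rightarrow> (nat \<Rightarrow> real) \<Rightarrow> real" where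
  "claim_price J x s0 c n h = (\<Sum>j=0..J+1. h j * phat J x s0 c j n)"

lemma claim_price_add:
  "claim_price J x s0 c n (\<lambda>j. h j + k j) = claim_price J x s0 c n h + claim_price J x s0 c n k"
  unfolding claim_price_def by (simp add: sum.distrib distrib_right)

lemma claim_price_uminus: "claim_price J x s0 c n (\<lambda>j. - h j) = - claim_price J x s0 c n h"
  unfolding claim_price_def by (simp add: sum_negf)

lemma claim_price_zero: "\<forall>j\<le>J+1. h j = 0 \<Longrightarrow> claim_price J x s0 c n h = 0"
  unfolding claim_price_def by (intro sum.neutral) auto

lemma claim_price_mono:
  "\<forall>j\<le>J+1. 0 \<le> phat J x s0 c j n \<Longrightarrow> \<forall>j\<le>J+1. h j \<le> k j \<Longrightarrow>
    claim_price J x s0 c n h \<le> claim_price J x s0 c n k"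
  unfolding claim_price_def by (intro sum_mono mult_right_mono) auto

lemma claim_price_call_portfolio:
  assumes "J \<ge> 1" and "x 0 = 0" and "c 0 n = s0"
  shows "claim_price J x s0 c n h = h 0 + (\<Sum>j=0..J. call_units J x h j * c j n)"
proof -
  \<comment> \<open>\<open>A j\<close> is the price of the unit call spread on \<open>[x (j-1), x j]\<close>; \<open>phat\<close> is its difference.\<close>
  define A where "A j = (if j = 0 then 1 else if j \<le> J then (c (j-1) n - c j n) / (x j - x (j-1)) else 0)"
    for j
  have "phat J x s0 c j n = A j - A (j+1)" if "j \<le> J" for j
    using that assms unfolding phat_def A_def by auto
  then have "claim_price J x s0 c n h = (\<Sum>j=0..J. h j * (A j - A (j+1))) + h (J+1) * c J n"
    unfolding claim_price_def by (simp add: phat_def)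
  also have "\<dots> = h 0 + (\<Sum>j<J. segment_slope J x h j * (c j n - c (j+1) n)) + h (J+1) * c J n"
    unfolding sum_by_parts by (simp add: A_def segment_slope_def)
  finally show ?thesis
    by (simp add: sum_call_units)
qed

lemma claim_price_maturity_mono:
  assumes "J \<ge> 1" and "x 0 = 0" and "c 0 n = s0" and "c 0 n' = s0"
    and "\<forall>j\<in>{1..J}. c j n \<le> c j n'" and "\<forall>j\<in>{1..J}. 0 \<le> call_units J x h j"
  shows "claim_price J x s0 c n h \<le> claim_price J x s0 c n' h"
proof -
  have "(\<Sum>j=0..J. call_units J x h j * c j n) \<le> (\<Sum>j=0..J. call_units J x h j * c j n')"
  proof (rule sum_mono)
    fix j assume "j \<in> {0..J}"
    then show "call_units J x h j * c j n \<le> call_units J x h j * c j n'"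
      using assms(3-6) by (cases "j = 0") (auto intro: mult_left_mono)
  qed
  then show ?thesis
    using claim_price_call_portfolio[where J=J and x=x, OF assms(1,2)] assms(3,4) by simp
qed

lemma phat_nonneg:
  fixes x :: "nat \<Rightarrow> real"
  assumes J1: "J \<ge> 1" and c0: "c 0 n = s0"
    and slope0: "(c 0 n - c 1 n) / x 1 < 1"
    and slope_decr: "\<forall>j. j + 1 < J \<longrightarrow>
        (c (j+1) n - c (j+2) n) / (x (j+2) - x (j+1)) < (c j n - c (j+1) n) / (x (j+1) - x j)"
    and slopeJ: "(c (J-1) n - c J n) / (x J - x (J-1)) > 0"
    and cJ: "c J n > 0"
    and j: "j \<le> J + 1"
  shows "phat J x s0 c j n \<ge> 0"
proof -
  consider "j = 0" | "0 < j \<and> j < J" | "j = J" | "j = J + 1"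
    using j J1 by linarith
  then show ?thesis
  proof cases
    case 2
    then have "(c j n - c (j+1) n) / (x (j+1) - x j) < (c (j-1) n - c j n) / (x j - x (j-1))"
      using slope_decr[rule_format, of "j-1"] by (simp add: numeral_2_eq_2)
    then show ?thesis
      unfolding phat_def using 2 by auto
  qed (use slope0 c0 slopeJ J1 cJ in \<open>auto simp: phat_def\<close>)
qed

section \<open>One-period hedging inequalities\<close>

text \<open>Here \<open>(a, b)\<close> is a segment of the strike grid and \<open>X\<close> a strike outside it.\<close>
lemma segment_hedge_ineq:
  fixes a b y X fa fb G da db :: real
  assumes "a < y" "y < b" and X: "X \<le> a \<or> b \<le> X"
    and ca: "0 \<le> fa + G + (X - a) * da" and cb: "0 \<le> fb + G + (X - b) * db"
  defines "u \<equiv> (fb - fa) / (b - a)"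
  shows "0 \<le> fa + u * (y - a) + G + (if da \<le> u then da else if u \<le> db then db else u) * (X - y)"
proof -
  have fb: "fb = fa + u * (b - a)"
    using assms(1,2) unfolding u_def by simp
  consider "da \<le> u" | "u < da" "u \<le> db" | "u < da" "db < u"
    by linarith
  then show ?thesis
  proof cases
    case 1
    have "0 \<le> (u - da) * (y - a)"
      using 1 assms(1) by simp
    then show ?thesis
      using 1 ca by (simp add: algebra_simps)
  next
    case 2
    have "0 \<le> (db - u) * (b - y)"
      using 2 assms(2) by simp
    then show ?thesis
      using 2 cb unfolding fb by (simp add: algebra_simps)
  next
    case 3
    have "0 \<le> fa + G + u * (X - a)"
      using X
    proof
      assume "X \<le> a"
      then have "0 \<le> (u - da) * (X - a)"
        using 3 by (simp add: mult_nonpos_nonpos)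
      then show ?thesis
        using ca by (simp add: algebra_simps)
    next
      assume "b \<le> X"
      then have "0 \<le> (u - db) * (X - b)"
        using 3 by simp
      then show ?thesis
        using cb unfolding fb by (simp add: algebra_simps)
    qed
    then show ?thesis
      using 3 by (simp add: algebra_simps)
  qed
qed

definition hedge_ratio :: "nat \<Rightarrow> (nat \<Rightarrow> real) \<Rightarrow> (nat \<Rightarrow> real) \<Rightarrow> (nat \<Rightarrow> real) \<Rightarrow> real \<Rightarrow> real" where
  "hedge_ratio J x d f =
     mixed_interp J x d (\<lambda>j. (f (j+1) - f j) / (x (j+1) - x j)) (min (d J) (f (J+1)))"

lemma dtilde1_eq_hedge_ratio: "dtilde1 J x z n = hedge_ratio J x (\<lambda>j. d1 z j n) (\<lambda>j. e1 z j n)"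
  by (simp add: dtilde1_def hedge_ratio_def u1_def[abs_def])

lemma dtilde2_eq_hedge_ratio:
  "dtilde2 J x z n = hedge_ratio J x (\<lambda>j. d2 z j n) (\<lambda>j. e1 z j n - v z j n)"
  by (simp add: dtilde2_def hedge_ratio_def u2_def[abs_def])

context strike_grid
begin

lemma hedge_ratio_node_ineq:
  assumes C1: "\<forall>j\<le>J. \<forall>k\<le>J. 0 \<le> f j + g k + (x k - x j) * d j" and "0 \<le> y" and k: "k \<le> J"
  shows "0 \<le> ext_interp J x f y + g k + hedge_ratio J x d f y * (x k - y)"
  using \<open>0 \<le> y\<close>
proof (cases rule: position_cases)
  case (node j)
  then show ?thesis
    using C1 k by (simp add: ext_interp_node mixed_interp_node hedge_ratio_def algebra_simps)
next
  case right
  define m where "m = min (d J) (f (J+1))"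
  have "0 \<le> (m - d J) * (x k - x J)"
    using x_le[OF k order.refl] by (simp add: m_def mult_nonpos_nonpos)
  moreover have "0 \<le> (y - x J) * (f (J+1) - m)"
    using right by (simp add: m_def)
  moreover have "0 \<le> f J + g k + (x k - x J) * d J"
    using C1 k by simp
  moreover have "ext_interp J x f y + g k + hedge_ratio J x d f y * (x k - y) =
      (f J + g k + (x k - x J) * d J) + (m - d J) * (x k - x J) + (y - x J) * (f (J+1) - m)"
    using right unfolding hedge_ratio_def mixed_interp_right[OF right] m_def[symmetric]
    by (simp add: ext_interp_right algebra_simps)
  ultimately show ?thesis
    by linarith
next
  case (segment i)
  have X: "x k \<le> x i \<or> x (i+1) \<le> x k"
    using x_le[of k i] x_le[of "i+1" k] k segment(1) by (cases "k \<le> i") auto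
  have "0 \<le> f i + g k + (x k - x i) * d i" "0 \<le> f (i+1) + g k + (x k - x (i+1)) * d (i+1)"
    using C1 k segment(1) by auto
  from segment_hedge_ineq[OF segment(2,3) X this] show ?thesis
    unfolding hedge_ratio_def mixed_interp_segment[OF segment]
      ext_interp_segment[OF segment(1) less_imp_le[OF segment(2)] segment(3)] .
qed

text \<open>The piecewise linear function \<open>y \<mapsto> ext_interp J x g y + \<delta> * y\<close> has final slope
  \<open>g (J+1) + \<delta> \<ge> 0\<close>, so it is minimised on \<open>[0, \<infinity>)\<close> at a strike.\<close>
lemma ext_interp_plus_linear_ge_node:
  assumes "0 \<le> y" and "0 \<le> g (J+1) + \<delta>"
  obtains k where "k \<le> J" "g k + \<delta> * (x k - y) \<le> ext_interp J x g y"
proof (cases "x J \<le> y")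
  case True
  have "0 \<le> (y - x J) * (g (J+1) + \<delta>)"
    using True assms(2) by simp
  then show ?thesis
    using True that[of J] by (simp add: ext_interp_right algebra_simps)
next
  case False
  then have "y < x J"
    by simp
  then obtain i where i: "i < J" "x i \<le> y" "y < x (i+1)"
    using segment_exists assms(1) by blast
  define u where "u = (g (i+1) - g i) / (x (i+1) - x i)"
  have e: "ext_interp J x g y = g i + u * (y - x i)"
    unfolding u_def using ext_interp_segment[OF i] by simp
  show ?thesis
  proof (cases "0 \<le> u + \<delta>")
    case True
    have "0 \<le> (u + \<delta>) * (y - x i)"
      using True i by simp
    then show ?thesis
      using that[of i] i e by (simp add: algebra_simps)
  next
    case False
    have "g (i+1) = g i + u * (x (i+1) - x i)"
      unfolding u_def using segment_length_pos[OF i(1)] by simp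
    moreover have "0 \<le> (u + \<delta>) * (y - x (i+1))"
      using False i by (simp add: mult_nonpos_nonpos)
    ultimately show ?thesis
      using that[of "i+1"] i e by (simp add: algebra_simps)
  qed
qed

lemma hedge_ratio_lower_bound:
  assumes C2: "\<forall>j\<le>J. 0 \<le> g (J+1) + d j" and C3: "0 \<le> f (J+1) + g (J+1)" and "0 \<le> y"
  shows "0 \<le> g (J+1) + hedge_ratio J x d f y"
  using \<open>0 \<le> y\<close>
proof (cases rule: position_cases)
  case (segment i)
  then show ?thesis
    using C2[rule_format, of i] C2[rule_format, of "i+1"]
    by (auto simp: hedge_ratio_def mixed_interp_segment)
qed (use C2 C3 in \<open>auto simp: hedge_ratio_def mixed_interp_node mixed_interp_right\<close>)

text \<open>Constraints (ii) for one period: holding the claims paying \<open>ext_interp J x f\<close> at \<open>t_n\<close>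
  and \<open>ext_interp J x g\<close> at \<open>t_(n+1)\<close> and trading the hedge ratio in between never loses.\<close>
lemma one_period_hedge:
  assumes C1: "\<forall>j\<le>J. \<forall>k\<le>J. 0 \<le> f j + g k + (x k - x j) * d j"
    and C2: "\<forall>j\<le>J. 0 \<le> g (J+1) + d j" and C3: "0 \<le> f (J+1) + g (J+1)"
    and "0 \<le> y" "0 \<le> y'"
  shows "0 \<le> ext_interp J x f y + ext_interp J x g y' + hedge_ratio J x d f y * (y' - y)"
proof -
  define \<delta> where "\<delta> = hedge_ratio J x d f y"
  have "0 \<le> g (J+1) + \<delta>"
    unfolding \<delta>_def using hedge_ratio_lower_bound[where f=f and g=g and d=d, OF C2 C3 \<open>0 \<le> y\<close>] .
  then obtain k where k: "k \<le> J" "g k + \<delta> * (x k - y') \<le> ext_interp J x g y'"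
    using ext_interp_plus_linear_ge_node \<open>0 \<le> y'\<close> by blast
  have "0 \<le> ext_interp J x f y + g k + \<delta> * (x k - y)"
    unfolding \<delta>_def using hedge_ratio_node_ineq[OF C1 \<open>0 \<le> y\<close> k(1)] .
  then show ?thesis
    using k(2) unfolding \<delta>_def[symmetric] by (simp add: algebra_simps)
qed

end

section \<open>Weak duality\<close>

definition line_envelope :: "nat \<Rightarrow> (nat \<Rightarrow> real) \<Rightarrow> (nat \<Rightarrow> real) \<Rightarrow> (nat \<Rightarrow> real) \<Rightarrow> nat \<Rightarrow> real"
  where "line_envelope J x f d k = Max ((\<lambda>j. - f j - d j * (x k - x j)) ` {..J})"

lemma line_envelope_ge: "j \<le> J \<Longrightarrow> - f j - d j * (x k - x j) \<le> line_envelope J x f d k"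
  unfolding line_envelope_def by (intro Max_ge) auto

lemma line_envelope_attained:
  obtains i where "i \<le> J" "line_envelope J x f d k = - f i - d i * (x k - x i)"
proof -
  have "line_envelope J x f d k \<in> (\<lambda>j. - f j - d j * (x k - x j)) ` {..J}"
    unfolding line_envelope_def by (intro Max_in) auto
  then show ?thesis
    using that by blast
qed

context strike_grid
begin

lemma call_units_nonneg_if_supported:
  assumes k: "1 \<le> k" "k \<le> J"
    and left: "H k - \<sigma> * (x k - x (k-1)) \<le> H (k-1)"
    and right: "if k < J then H k + \<sigma> * (x (k+1) - x k) \<le> H (k+1) else \<sigma> \<le> H (J+1)"
  shows "0 \<le> call_units J x H k"
proof -
  have "k - 1 < J" "k - 1 + 1 = k"
    using k by simp_all
  moreover have "0 < x k - x (k-1)"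
    using segment_length_pos[of "k-1"] k by simp
  ultimately have "segment_slope J x H (k-1) \<le> \<sigma>"
    using left by (simp only: segment_slope_def if_True pos_divide_le_eq)
  moreover have "\<sigma> \<le> segment_slope J x H k"
    using right segment_length_pos[of k] by (auto simp: segment_slope_def pos_le_divide_eq algebra_simps)
  ultimately show ?thesis
    using k by (simp add: call_units_def)
qed

text \<open>The upper envelope of the lines \<open>k \<mapsto> - f j - d j * (x k - x j)\<close> is convex on the strikes,
  lies above \<open>- f\<close> and, by constraints (ii), below \<open>g\<close>.\<close>
lemma convex_separator_exists:
  assumes C1: "\<forall>j\<le>J. \<forall>k\<le>J. 0 \<le> f j + g k + (x k - x j) * d j"
    and C2: "\<forall>j\<le>J. 0 \<le> g (J+1) + d j" and C3: "0 \<le> f (J+1) + g (J+1)"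
  obtains H where "\<forall>j\<le>J+1. - f j \<le> H j" "\<forall>j\<le>J+1. H j \<le> g j"
    "\<forall>k\<in>{1..J}. 0 \<le> call_units J x H k"
proof -
  define M where "M = Max ((\<lambda>j. - d j) ` {..J})"
  have M_ge: "- d j \<le> M" if "j \<le> J" for j
    unfolding M_def using that by (intro Max_ge) auto
  have "M \<in> (\<lambda>j. - d j) ` {..J}"
    unfolding M_def by (intro Max_in) auto
  then have M_le: "M \<le> g (J+1)"
    using C2 by auto
  define H where "H k = (if k \<le> J then line_envelope J x f d k else max M (- f (J+1)))" for k
  have "- f k \<le> H k" if "k \<le> J+1" for k
    using line_envelope_ge[where j=k and k=k and x=x and f=f and d=d] that by (cases "k \<le> J") (auto simp: H_def le_Suc_eq)
  moreover have "H k \<le> g k" if "k \<le> J+1" for k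
  proof (cases "k \<le> J")
    case True
    obtain i where i: "i \<le> J" "line_envelope J x f d k = - f i - d i * (x k - x i)"
      by (rule line_envelope_attained)
    have "0 \<le> f i + g k + (x k - x i) * d i"
      using C1 True i(1) by simp
    then show ?thesis
      using True i(2) by (simp add: H_def algebra_simps)
  next
    case False
    then have "k = J+1"
      using that by simp
    then show ?thesis
      using M_le C3 by (simp add: H_def)
  qed
  moreover have "0 \<le> call_units J x H k" if k: "1 \<le> k" "k \<le> J" for k
  proof -
    obtain i where i: "i \<le> J" "line_envelope J x f d k = - f i - d i * (x k - x i)"
      by (rule line_envelope_attained)
    then have Hk: "H k = - f i - d i * (x k - x i)"
      using k by (simp add: H_def)
    show ?thesis
    proof (rule call_units_nonneg_if_supported[OF k])
      show "H k - (- d i) * (x k - x (k-1)) \<le> H (k-1)"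
        using line_envelope_ge[OF i(1), where k="k-1" and x=x and f=f and d=d] k Hk by (auto simp: H_def algebra_simps)
      show "if k < J then H k + (- d i) * (x (k+1) - x k) \<le> H (k+1) else - d i \<le> H (J+1)"
        using line_envelope_ge[OF i(1), where k="k+1" and x=x and f=f and d=d] M_ge[OF i(1)] Hk
        by (auto simp: H_def algebra_simps)
    qed
  qed
  ultimately show ?thesis
    using that[of H] by simp
qed

text \<open>One-period weak duality: the convex separator costs more at the later maturity, since
  call prices increase with maturity.\<close>
lemma claim_price_pair_nonneg:
  assumes J1: "J \<ge> 1"
    and C1: "\<forall>j\<le>J. \<forall>k\<le>J. 0 \<le> f j + g k + (x k - x j) * d j"
    and C2: "\<forall>j\<le>J. 0 \<le> g (J+1) + d j" and C3: "0 \<le> f (J+1) + g (J+1)"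
    and c0: "c 0 n = s0" "c 0 n' = s0" and c_le: "\<forall>j\<in>{1..J}. c j n \<le> c j n'"
    and phat_n: "\<forall>j\<le>J+1. 0 \<le> phat J x s0 c j n" and phat_n': "\<forall>j\<le>J+1. 0 \<le> phat J x s0 c j n'"
  shows "0 \<le> claim_price J x s0 c n f + claim_price J x s0 c n' g"
proof -
  obtain H where fH: "\<forall>j\<le>J+1. - f j \<le> H j" and Hg: "\<forall>j\<le>J+1. H j \<le> g j"
    and H_convex: "\<forall>k\<in>{1..J}. 0 \<le> call_units J x H k"
    using convex_separator_exists[OF C1 C2 C3] .
  have "- claim_price J x s0 c n f \<le> claim_price J x s0 c n H"
    using claim_price_mono[OF phat_n fH] by (simp add: claim_price_uminus)
  also have "\<dots> \<le> claim_price J x s0 c n' H"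
    using claim_price_maturity_mono[OF J1 x_0 c0 c_le H_convex] .
  also have "\<dots> \<le> claim_price J x s0 c n' g"
    using claim_price_mono[OF phat_n' Hg] .
  finally show ?thesis
    by simp
qed

end

section \<open>Convex payoffs below interpolations\<close>

lemma convex_le_asymptotic_line:
  fixes A :: "real \<Rightarrow> real"
  assumes conv: "convex_on {0..} A" and lim: "((\<lambda>y. A y / y) \<longlongrightarrow> l) at_top"
    and "0 \<le> p" "p \<le> y"
  shows "A y \<le> A p + (y - p) * l"
proof (cases "p = y")
  case False
  with assms have py: "p < y"
    by simp
  define s where "s Y = (A Y - A p) / (Y - p)" for Y
  have s_mono: "s y \<le> s Y" if "y < Y" for Y
  proof -
    have swap: "(a - b) / (c - d) = (b - a) / (d - c)" for a b c d :: real
      by (metis minus_diff_eq minus_divide_divide)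
    show ?thesis
      using convex_on_slope_le(1)[OF conv _ _ py that] assms(3) py that
      unfolding s_def swap[of "A p"] swap[of p] by simp
  qed
  have "((\<lambda>Y. (A Y / Y - A p / Y) / (1 - p / Y)) \<longlongrightarrow> (l - 0) / (1 - 0)) at_top"
    by (intro tendsto_intros lim tendsto_divide_0[OF tendsto_const]
        filterlim_at_top_imp_at_infinity filterlim_ident) simp
  moreover have "\<forall>\<^sub>F Y in at_top. (A Y / Y - A p / Y) / (1 - p / Y) = s Y"
    using eventually_gt_at_top[of "max 0 p"]
    by eventually_elim (simp add: s_def field_simps)
  ultimately have "(s \<longlongrightarrow> l) at_top"
    by (simp add: tendsto_cong)
  then have "s y \<le> l"
    by (rule tendsto_lowerbound) (auto simp: eventually_at_top_dense intro: s_mono)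
  then show ?thesis
    using py by (simp add: s_def pos_divide_le_eq algebra_simps)
qed simp

context strike_grid
begin

lemma convex_le_ext_interp:
  fixes A :: "real \<Rightarrow> real"
  assumes conv: "convex_on {0..} A" and lim: "((\<lambda>y. A y / y) \<longlongrightarrow> l) at_top"
    and A_le: "\<forall>j\<le>J. A (x j) \<le> h j" and l_le: "l \<le> h (J+1)" and "0 \<le> y"
  shows "A y \<le> ext_interp J x h y"
proof (cases "x J \<le> y")
  case True
  have "A y \<le> A (x J) + (y - x J) * l"
    using convex_le_asymptotic_line[OF conv lim x_nonneg[OF order.refl] True] .
  also have "\<dots> \<le> h J + (y - x J) * h (J+1)"
    using A_le True l_le by (intro add_mono mult_left_mono) auto
  finally show ?thesis
    using True by (simp add: ext_interp_right)
next
  case False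
  then have "y < x J"
    by simp
  then obtain i where i: "i < J" "x i \<le> y" "y < x (i+1)"
    using segment_exists assms(5) by blast
  define D where "D = x (i+1) - x i"
  define t where "t = (y - x i) / D"
  have D: "0 < D"
    using segment_length_pos[OF i(1)] by (simp add: D_def)
  have t: "0 \<le> t" "t \<le> 1"
    using D i by (simp_all add: t_def D_def)
  have "convex_on {x i..x (i+1)} A"
    by (rule convex_on_subset[OF conv]) (use x_nonneg[of i] i in auto)
  then have "A y \<le> (A (x (i+1)) - A (x i)) / D * (y - x i) + A (x i)"
    unfolding D_def using i by (intro convex_onD_Icc') auto
  also have "\<dots> = A (x i) + t * (A (x (i+1)) - A (x i))"
    by (simp add: t_def)
  also have "\<dots> \<le> h i + t * (h (i+1) - h i)"
  proof -
    have "0 \<le> (1 - t) * (h i - A (x i)) + t * (h (i+1) - A (x (i+1)))"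
      using A_le i(1) t by (intro add_nonneg_nonneg mult_nonneg_nonneg) auto
    then show ?thesis
      by (simp add: algebra_simps)
  qed
  also have "\<dots> = ext_interp J x h y"
    using ext_interp_segment[OF i] by (simp add: t_def D_def)
  finally show ?thesis .
qed

end

section \<open>Affine programs attain their infimum\<close>

text \<open>Points of the linear program are tuples of functions; pointwise operations make them
  a real vector space.\<close>
instantiation "fun" :: (type, real_vector) real_vector
begin

definition scaleR_fun :: "real \<Rightarrow> ('a \<Rightarrow> 'b) \<Rightarrow> 'a \<Rightarrow> 'b" where
  "scaleR_fun r f = (\<lambda>x. r *\<^sub>R f x)"

instance
  by standard (simp_all add: scaleR_fun_def fun_eq_iff scaleR_add_right scaleR_add_left)

end

lemma scaleR_fun_apply [simp]: "(r *\<^sub>R f) x = r *\<^sub>R f x"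
  by (simp add: scaleR_fun_def)

definition affine_fun :: "('v::real_vector \<Rightarrow> real) \<Rightarrow> bool" where
  "affine_fun g \<longleftrightarrow> (\<forall>u w s t. g (s *\<^sub>R u + t *\<^sub>R w) = s * g u + t * g w + (1 - s - t) * g 0)"

lemma affine_funD_add: "affine_fun g \<Longrightarrow> g (u + w) = g u + g w - g 0"
  unfolding affine_fun_def by (drule spec[of _ u], drule spec[of _ w], drule spec[of _ 1],
      drule spec[of _ 1]) simp

lemma affine_funD_scaleR: "affine_fun g \<Longrightarrow> g (s *\<^sub>R u) = s * g u + (1 - s) * g 0"
  unfolding affine_fun_def by (drule spec[of _ u], drule spec[of _ 0], drule spec[of _ s],
      drule spec[of _ 0]) simp

lemma affine_fun_combination:
  assumes "affine_fun g" and "s + t + r = 1"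
  shows "g (s *\<^sub>R u + t *\<^sub>R w + r *\<^sub>R y) = s * g u + t * g w + r * g y"
proof -
  have "g (s *\<^sub>R u + t *\<^sub>R w + r *\<^sub>R y) = s * g u + t * g w + r * g y + (1 - s - t - r) * g 0"
    by (simp add: affine_funD_add[OF assms(1)] affine_funD_scaleR[OF assms(1)] algebra_simps)
  then show ?thesis
    using assms(2) by simp
qed

lemma affine_fun_convex_combination:
  "affine_fun g \<Longrightarrow> g ((1 - t) *\<^sub>R p + t *\<^sub>R q) = (1 - t) * g p + t * g q"
  using affine_fun_combination[of g "1 - t" t 0 p q 0] by simp

lemma affine_fun_min_at_0_if_bounded_below:
  assumes "affine_fun f" and b: "\<And>u. b \<le> f u"
  shows "f 0 \<le> f u"
proof (rule ccontr)
  assume "\<not> f 0 \<le> f u"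
  define t where "t = (f 0 - b + 1) / (f 0 - f u)"
  have "f (t *\<^sub>R u) = f 0 - t * (f 0 - f u)"
    by (simp add: affine_funD_scaleR[OF assms(1)] algebra_simps)
  also have "\<dots> = b - 1"
    using \<open>\<not> f 0 \<le> f u\<close> by (simp add: t_def)
  finally show False
    using b[of "t *\<^sub>R u"] by simp
qed

lemma affine_crossing_point:
  assumes h: "affine_fun h" and f: "affine_fun f" and "convex S"
    and p: "p \<in> S" "0 \<le> h p" and q: "q \<in> S" "h q < 0" and "f q \<le> f p"
  obtains r where "r \<in> S" "h r = 0" "f r \<le> f p"
proof
  define t where "t = h p / (h p - h q)"
  define r where "r = (1 - t) *\<^sub>R p + t *\<^sub>R q"
  have t: "0 \<le> t" "t \<le> 1"
    using p(2) q(2) by (simp_all add: t_def field_simps)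
  show "r \<in> S"
    using convexD[OF \<open>convex S\<close> p(1) q(1), of "1 - t" t] t by (simp add: r_def)
  have "h r = h p - t * (h p - h q)"
    unfolding r_def affine_fun_convex_combination[OF h] by (simp add: algebra_simps)
  then show "h r = 0"
    using p(2) q(2) by (simp add: t_def)
  have "f r = (1 - t) * f p + t * f q"
    unfolding r_def affine_fun_convex_combination[OF f] ..
  also have "\<dots> \<le> (1 - t) * f p + t * f p"
    using t \<open>f q \<le> f p\<close> by (intro add_left_mono mult_left_mono) auto
  finally show "f r \<le> f p"
    by (simp add: algebra_simps)
qed

lemma affine_hyperplane_retraction:
  assumes h: "affine_fun h" and "h a \<noteq> h 0"
  obtains \<pi> where "\<And>u. h (\<pi> u) = 0" "\<And>u. h u = 0 \<Longrightarrow> \<pi> u = u"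
    "\<And>g. affine_fun g \<Longrightarrow> affine_fun (g \<circ> \<pi>)"
proof
  define c where "c = 1 / (h a - h 0)"
  define e where "e = c *\<^sub>R a"
  have "h e - h 0 = c * (h a - h 0)"
    unfolding e_def affine_funD_scaleR[OF h] by (simp add: algebra_simps)
  also have "\<dots> = 1"
    using assms(2) by (simp add: c_def)
  finally have he: "h e - h 0 = 1" .
  define \<pi> where "\<pi> u = u - h u *\<^sub>R e" for u
  have h_shift: "h (u - c *\<^sub>R e) = h u - c * (h e - h 0)" for u c
    using affine_funD_add[OF h, of u "(- c) *\<^sub>R e"] affine_funD_scaleR[OF h, of "- c" e]
    by (simp add: algebra_simps)
  show "h (\<pi> u) = 0" for u
    unfolding \<pi>_def h_shift he by simp
  show "\<pi> u = u" if "h u = 0" for u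
    using that by (simp add: \<pi>_def)
  show "affine_fun (g \<circ> \<pi>)" if g: "affine_fun g" for g
    unfolding affine_fun_def
  proof (intro allI)
    fix u w s t
    have "\<pi> (s *\<^sub>R u + t *\<^sub>R w) = s *\<^sub>R \<pi> u + t *\<^sub>R \<pi> w + (1 - s - t) *\<^sub>R \<pi> 0"
    proof -
      have hc: "h (s *\<^sub>R u + t *\<^sub>R w) = s * h u + t * h w + (1 - s - t) * h 0"
        using h unfolding affine_fun_def by blast
      show ?thesis
        unfolding \<pi>_def hc by (simp add: algebra_simps scaleR_add_left scaleR_diff_left)
    qed
    then show "(g \<circ> \<pi>) (s *\<^sub>R u + t *\<^sub>R w) =
        s * (g \<circ> \<pi>) u + t * (g \<circ> \<pi>) w + (1 - s - t) * (g \<circ> \<pi>) 0"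
      using affine_fun_combination[OF g, of s t "1 - s - t"] by simp
  qed
qed

lemma affine_push_to_hyperplane:
  assumes h: "affine_fun h" and f: "affine_fun f" and "convex S"
    and min_if_bounded: "\<exists>b. \<forall>u\<in>S. b \<le> f u \<Longrightarrow> \<exists>q\<in>S. \<forall>u\<in>S. f q \<le> f u"
    and no_inactive_min: "\<not> (\<exists>q\<in>S. (\<forall>u\<in>S. f q \<le> f u) \<and> 0 \<le> h q)"
    and b: "\<And>u. u \<in> S \<Longrightarrow> 0 \<le> h u \<Longrightarrow> b \<le> f u"
    and p: "p \<in> S" "0 \<le> h p"
  obtains r where "r \<in> S" "h r = 0" "f r \<le> f p"
proof -
  have "\<exists>q\<in>S. h q < 0 \<and> f q \<le> f p"
  proof (cases "\<exists>b'. \<forall>u\<in>S. b' \<le> f u")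
    case True
    then obtain q where q: "q \<in> S" "\<forall>u\<in>S. f q \<le> f u"
      using min_if_bounded by blast
    then have "\<not> 0 \<le> h q"
      using no_inactive_min by blast
    then show ?thesis
      using q p(1) by (auto simp: not_le)
  next
    case False
    then obtain q where q: "q \<in> S" "f q < b"
      by (meson not_le)
    then have "\<not> 0 \<le> h q"
      using b[OF q(1)] by auto
    moreover have "f q \<le> f p"
      using q(2) b[OF p] by simp
    ultimately show ?thesis
      using q(1) by (auto simp: not_le)
  qed
  then obtain q where "q \<in> S" "h q < 0" "f q \<le> f p"
    by blast
  then show ?thesis
    using affine_crossing_point[OF h f \<open>convex S\<close> p] that by blast
qed

lemma convex_affine_constraints:
  assumes "\<forall>i\<in>I. affine_fun (g i)"
  shows "convex {u. \<forall>i\<in>I. 0 \<le> g i u}"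
  unfolding convex_alt
proof (intro ballI allI impI)
  fix p q and t :: real
  assume "p \<in> {u. \<forall>i\<in>I. 0 \<le> g i u}" "q \<in> {u. \<forall>i\<in>I. 0 \<le> g i u}" "0 \<le> t \<and> t \<le> 1"
  then show "(1 - t) *\<^sub>R p + t *\<^sub>R q \<in> {u. \<forall>i\<in>I. 0 \<le> g i u}"
    using assms by (auto simp: affine_fun_convex_combination)
qed

lemma min_via_retraction:
  assumes push: "\<And>p. p \<in> S \<Longrightarrow> 0 \<le> h p \<Longrightarrow> \<exists>r\<in>S. h r = 0 \<and> f r \<le> f p"
    and \<pi>: "\<And>u. h (\<pi> u) = (0::real)" "\<And>u. h u = 0 \<Longrightarrow> \<pi> u = u"
    and min: "\<pi> u \<in> S" "\<And>u'. \<pi> u' \<in> S \<Longrightarrow> f (\<pi> u) \<le> (f (\<pi> u') :: real)"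
  shows "\<exists>q\<in>S. 0 \<le> h q \<and> (\<forall>p\<in>S. 0 \<le> h p \<longrightarrow> f q \<le> f p)"
proof -
  have "f (\<pi> u) \<le> f p" if p: "p \<in> S" "0 \<le> h p" for p
  proof -
    obtain r where r: "r \<in> S" "h r = 0" "f r \<le> f p"
      using push[OF p] by blast
    then show ?thesis
      using min(2)[of r] \<pi>(2)[OF r(2)] by simp
  qed
  then show ?thesis
    using min(1) \<pi>(1) by (metis order_refl)
qed

text \<open>Induction on the constraints: a new constraint \<open>h \<ge> 0\<close> is either inactive at a minimiser
  of the smaller system, or every feasible point can be moved to the hyperplane \<open>h = 0\<close> without
  increasing the objective, and the problem restricted to that hyperplane (through a retraction
  onto it) has one constraint less.\<close>
theorem affine_program_attains_min:
  fixes g :: "'i \<Rightarrow> 'v::real_vector \<Rightarrow> real"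
  assumes "finite I" and "\<forall>i\<in>I. affine_fun (g i)" and "affine_fun f"
    and "\<exists>u. \<forall>i\<in>I. 0 \<le> g i u" and "\<exists>b. \<forall>u. (\<forall>i\<in>I. 0 \<le> g i u) \<longrightarrow> b \<le> f u"
  shows "\<exists>u. (\<forall>i\<in>I. 0 \<le> g i u) \<and> (\<forall>u'. (\<forall>i\<in>I. 0 \<le> g i u') \<longrightarrow> f u \<le> f u')"
  using assms
proof (induction I arbitrary: g f rule: finite_induct)
  case empty
  then show ?case
    using affine_fun_min_at_0_if_bounded_below by blast
next
  case (insert m I)
  define h where "h = g m"
  define S where "S = {u. \<forall>i\<in>I. 0 \<le> g i u}"
  have P_iff: "(\<forall>i\<in>insert m I. 0 \<le> g i u) \<longleftrightarrow> u \<in> S \<and> 0 \<le> h u" for u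
    by (auto simp: S_def h_def)
  have g: "\<forall>i\<in>I. affine_fun (g i)" and h: "affine_fun h"
    using insert.prems(1) by (auto simp: h_def)
  note f = insert.prems(2)
  have "convex S"
    unfolding S_def using g by (rule convex_affine_constraints)
  obtain p0 where p0: "p0 \<in> S" "0 \<le> h p0"
    using insert.prems(3) P_iff by blast
  obtain b where b: "\<And>u. u \<in> S \<Longrightarrow> 0 \<le> h u \<Longrightarrow> b \<le> f u"
    using insert.prems(4) P_iff by blast
  have IH: "\<exists>q\<in>S. \<forall>u\<in>S. f q \<le> f u" if "\<exists>b. \<forall>u\<in>S. b \<le> f u"
    using insert.IH[OF g f] that p0(1) unfolding S_def by blast
  have "\<exists>q\<in>S. 0 \<le> h q \<and> (\<forall>p\<in>S. 0 \<le> h p \<longrightarrow> f q \<le> f p)"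
  proof (cases "\<forall>u. h u = h 0")
    case True
    then show ?thesis
      using IH p0 b by (metis order_refl)
  next
    case False
    then obtain a where "h a \<noteq> h 0"
      by blast
    then obtain \<pi> where \<pi>: "\<And>u. h (\<pi> u) = 0" "\<And>u. h u = 0 \<Longrightarrow> \<pi> u = u"
      "\<And>g. affine_fun g \<Longrightarrow> affine_fun (g \<circ> \<pi>)"
      using affine_hyperplane_retraction[OF h] by blast
    show ?thesis
    proof (cases "\<exists>q\<in>S. (\<forall>u\<in>S. f q \<le> f u) \<and> 0 \<le> h q")
      case False
      have push: "\<exists>r\<in>S. h r = 0 \<and> f r \<le> f p" if "p \<in> S" "0 \<le> h p" for p
        using affine_push_to_hyperplane[OF h f \<open>convex S\<close> IH False b that] by blast
      have "\<exists>u. (\<forall>i\<in>I. 0 \<le> (g i \<circ> \<pi>) u) \<and>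
          (\<forall>u'. (\<forall>i\<in>I. 0 \<le> (g i \<circ> \<pi>) u') \<longrightarrow> (f \<circ> \<pi>) u \<le> (f \<circ> \<pi>) u')"
      proof (rule insert.IH)
        show "\<forall>i\<in>I. affine_fun (g i \<circ> \<pi>)" "affine_fun (f \<circ> \<pi>)"
          using g f \<pi>(3) by auto
        obtain r where "r \<in> S" "h r = 0"
          using push[OF p0] by blast
        then show "\<exists>u. \<forall>i\<in>I. 0 \<le> (g i \<circ> \<pi>) u"
          using \<pi>(2) by (intro exI[of _ r]) (simp add: S_def)
        show "\<exists>b. \<forall>u. (\<forall>i\<in>I. 0 \<le> (g i \<circ> \<pi>) u) \<longrightarrow> b \<le> (f \<circ> \<pi>) u"
          using b \<pi>(1) by (intro exI[of _ b]) (simp add: S_def)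
      qed
      then obtain u where "\<pi> u \<in> S" "\<And>u'. \<pi> u' \<in> S \<Longrightarrow> f (\<pi> u) \<le> f (\<pi> u')"
        unfolding S_def by auto
      then show ?thesis
        using min_via_retraction[OF push \<pi>(1,2)] by blast
    qed blast
  qed
  then show ?case
    unfolding P_iff by blast
qed

section \<open>The linear program\<close>

type_synonym lp_coords =
  "(nat \<Rightarrow> nat \<Rightarrow> real) \<times> (nat \<Rightarrow> nat \<Rightarrow> real) \<times> (nat \<Rightarrow> nat \<Rightarrow> real) \<times>
   (nat \<Rightarrow> nat \<Rightarrow> real) \<times> (nat \<Rightarrow> nat \<Rightarrow> real)"

definition lp_point_of :: "lp_coords \<Rightarrow> lp_point" where
  "lp_point_of u = \<lparr>e1 = fst u, e2 = fst (snd u), v = fst (snd (snd u)),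
     d1 = fst (snd (snd (snd u))), d2 = snd (snd (snd (snd u)))\<rparr>"

lemma lp_point_of_sel [simp]:
  "e1 (lp_point_of u) = fst u" "e2 (lp_point_of u) = fst (snd u)" "v (lp_point_of u) = fst (snd (snd u))"
  "d1 (lp_point_of u) = fst (snd (snd (snd u)))" "d2 (lp_point_of u) = snd (snd (snd (snd u)))"
  by (simp_all add: lp_point_of_def)

lemma lp_point_of_coords: "lp_point_of (e1 z, e2 z, v z, d1 z, d2 z) = z"
  by (cases z) (simp add: lp_point_of_def)

text \<open>Each constraint is an affine function of the coordinates required to be nonnegative; the
  equality constraints appear with both signs.\<close>
definition lp_constraints ::
    "nat \<Rightarrow> nat \<Rightarrow> (nat \<Rightarrow> real) \<Rightarrow> (real \<Rightarrow> nat \<Rightarrow> real) \<Rightarrow> (nat \<Rightarrow> real) \<Rightarrow> (lp_coords \<Rightarrow> real) set"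
  where
  "lp_constraints N J x a ell = (let z = lp_point_of in
    (\<lambda>j u. e1 (z u) j N) ` {..J+1} \<union> (\<lambda>j u. - e1 (z u) j N) ` {..J+1} \<union>
    (\<lambda>j u. e2 (z u) j 1) ` {..J+1} \<union> (\<lambda>j u. - e2 (z u) j 1) ` {..J+1} \<union>
    (\<lambda>(n,j) u. v (z u) j n) ` ({1..N} \<times> {..J+1}) \<union>
    (\<lambda>(n,j) u. v (z u) j n - a (x j) n) ` ({1..N} \<times> {..J}) \<union>
    (\<lambda>n u. v (z u) (J+1) n - ell n) ` {1..N} \<union>
    (\<lambda>(n,j,k) u. e1 (z u) j n + e2 (z u) k (n+1) + (x k - x j) * d1 (z u) j n)
      ` ({1..<N} \<times> {..J} \<times> {..J}) \<union>
    (\<lambda>n u. e1 (z u) (J+1) n - d1 (z u) (J+1) n) ` {1..<N} \<union>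
    (\<lambda>(n,j) u. e2 (z u) (J+1) (n+1) + d1 (z u) j n) ` ({1..<N} \<times> {..J}) \<union>
    (\<lambda>n u. e1 (z u) (J+1) n + e2 (z u) (J+1) (n+1)) ` {1..<N} \<union>
    (\<lambda>(n,j,k) u. e1 (z u) j n + e2 (z u) k (n+1) + (x k - x j) * d2 (z u) j n
        - v (z u) j n + v (z u) k (n+1)) ` ({1..<N} \<times> {..J} \<times> {..J}) \<union>
    (\<lambda>n u. e1 (z u) (J+1) n - d2 (z u) (J+1) n - v (z u) (J+1) n) ` {1..<N} \<union>
    (\<lambda>(n,j) u. e2 (z u) (J+1) (n+1) + d2 (z u) j n + v (z u) (J+1) (n+1)) ` ({1..<N} \<times> {..J}) \<union>
    (\<lambda>n u. e1 (z u) (J+1) n + e2 (z u) (J+1) (n+1) - v (z u) (J+1) n + v (z u) (J+1) (n+1))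
      ` {1..<N})"

lemma finite_lp_constraints: "finite (lp_constraints N J x a ell)"
  by (simp add: lp_constraints_def)

lemma affine_lp_constraints: "\<forall>g\<in>lp_constraints N J x a ell. affine_fun g"
  by (auto simp: lp_constraints_def affine_fun_def algebra_simps)

lemma lp_feasible_iff_constraints:
  "lp_feasible N J x a ell (lp_point_of u) \<longleftrightarrow> (\<forall>g\<in>lp_constraints N J x a ell. 0 \<le> g u)"
proof -
  have zero_iff: "(r::real) = 0 \<longleftrightarrow> 0 \<le> r \<and> 0 \<le> - r" for r
    by auto
  show ?thesis
    unfolding lp_constraints_def lp_feasible_def Let_def ball_Un ball_simps split_paired_Ball_Sigma
    by (simp add: Ball_def all_conj_distrib imp_conjR zero_iff del: lp_point_of_sel)
qed

lemma affine_lp_objective: "affine_fun (\<lambda>u. lp_objective N J x s0 c (lp_point_of u))"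
  unfolding lp_objective_def affine_fun_def
  by (simp add: algebra_simps sum.distrib sum_distrib_left)

lemma lp_optimum_exists:
  assumes "\<exists>z. lp_feasible N J x a ell z"
    and "\<forall>z. lp_feasible N J x a ell z \<longrightarrow> b \<le> lp_objective N J x s0 c z"
  shows "\<exists>z. lp_feasible N J x a ell z \<and>
    (\<forall>z'. lp_feasible N J x a ell z' \<longrightarrow> lp_objective N J x s0 c z \<le> lp_objective N J x s0 c z')"
proof -
  let ?G = "lp_constraints N J x a ell" and ?obj = "\<lambda>u. lp_objective N J x s0 c (lp_point_of u)"
  have feasible_coords: "lp_feasible N J x a ell z \<longleftrightarrow>
      (\<forall>g\<in>?G. 0 \<le> g (e1 z, e2 z, v z, d1 z, d2 z))" for z
    using lp_feasible_iff_constraints[of N J x a ell "(e1 z, e2 z, v z, d1 z, d2 z)"]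
    by (simp only: lp_point_of_coords)
  have "\<exists>u. \<forall>g\<in>?G. 0 \<le> g u"
  proof -
    obtain z where "lp_feasible N J x a ell z"
      using assms(1) by blast
    then show ?thesis
      unfolding feasible_coords by blast
  qed
  moreover have "\<exists>b. \<forall>u. (\<forall>g\<in>?G. 0 \<le> g u) \<longrightarrow> b \<le> ?obj u"
    using assms(2) unfolding lp_feasible_iff_constraints[symmetric] by blast
  ultimately have "\<exists>u. (\<forall>g\<in>?G. 0 \<le> g u) \<and> (\<forall>u'. (\<forall>g\<in>?G. 0 \<le> g u') \<longrightarrow> ?obj u \<le> ?obj u')"
    by (rule affine_program_attains_min[where g="\<lambda>g. g", OF finite_lp_constraints
        affine_lp_constraints affine_lp_objective])
  then obtain u where u: "\<forall>g\<in>?G. 0 \<le> g u" "\<And>u'. \<forall>g\<in>?G. 0 \<le> g u' \<Longrightarrow> ?obj u \<le> ?obj u'"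
    by blast
  have "lp_objective N J x s0 c (lp_point_of u) \<le> lp_objective N J x s0 c z'"
    if "lp_feasible N J x a ell z'" for z'
    using u(2)[of "(e1 z', e2 z', v z', d1 z', d2 z')"] that
    by (simp only: feasible_coords lp_point_of_coords)
  moreover have "lp_feasible N J x a ell (lp_point_of u)"
    using u(1) by (simp only: lp_feasible_iff_constraints)
  ultimately show ?thesis
    by blast
qed

lemma lp_objective_eq_claim_prices:
  "lp_objective N J x s0 c z =
    (\<Sum>n=1..N. claim_price J x s0 c n (\<lambda>j. e1 z j n) + claim_price J x s0 c n (\<lambda>j. e2 z j n))
    + claim_price J x s0 c N (\<lambda>j. v z j N)"
  unfolding lp_objective_def claim_price_def by (simp add: sum.distrib distrib_right)

lemma sum_shift_pairs:
  fixes A B :: "nat \<Rightarrow> 'a::comm_monoid_add"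
  assumes "N \<ge> 1"
  shows "(\<Sum>n=1..N. A n + B n) = A N + B 1 + (\<Sum>n\<in>{1..<N}. A n + B (n+1))"
proof -
  obtain M where "N = Suc M"
    using assms by (cases N) auto
  moreover have "(\<Sum>n=1..Suc M. A n + B n) = A (Suc M) + B 1 + (\<Sum>n\<in>{1..<Suc M}. A n + B (n+1))"
    by (induction M) (simp_all add: ac_simps)
  ultimately show ?thesis
    by simp
qed

context strike_grid
begin

lemma lp_feasible_exists:
  assumes a_nonneg: "\<forall>n\<in>{1..N}. \<forall>y\<ge>0. 0 \<le> a y n"
  shows "\<exists>z. lp_feasible N J x a ell z"
proof -
  define A where "A = (\<Sum>n=1..N. \<Sum>j=0..J. a (x j) n)"
  define B where "B = (\<Sum>n=1..N. \<bar>ell n\<bar>)"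
  have a_nonneg': "0 \<le> a (x j) n" if "n \<in> {1..N}" "j \<le> J" for n j
    using a_nonneg x_nonneg that by simp
  have a_le: "a (x j) n \<le> A" if "n \<in> {1..N}" "j \<le> J" for n j
  proof -
    have "a (x j) n \<le> (\<Sum>j=0..J. a (x j) n)"
      using that a_nonneg' by (intro member_le_sum) auto
    also have "\<dots> \<le> A"
      unfolding A_def using that a_nonneg' by (intro member_le_sum sum_nonneg) auto
    finally show ?thesis .
  qed
  have ell_le: "ell n \<le> B" if "n \<in> {1..N}" for n
    using member_le_sum[of n "{1..N}" "\<lambda>n. \<bar>ell n\<bar>"] that by (simp add: B_def)
  have "0 \<le> A" "0 \<le> B"
    unfolding A_def B_def using a_nonneg' by (auto intro!: sum_nonneg)
  then have "lp_feasible N J x a ell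
      \<lparr>e1 = (\<lambda>j n. 0), e2 = (\<lambda>j n. 0), v = (\<lambda>j n. if j \<le> J then A + B * x j else B),
       d1 = (\<lambda>j n. 0), d2 = (\<lambda>j n. - B)\<rparr>"
    using a_le ell_le x_nonneg by (fastforce simp: lp_feasible_def algebra_simps intro: add_increasing2)
  then show ?thesis
    by blast
qed

lemma lp_objective_nonneg:
  assumes J1: "J \<ge> 1" and N1: "N \<ge> 1"
    and c0: "\<forall>n\<in>{1..N}. c 0 n = s0"
    and phat_nonneg: "\<forall>n\<in>{1..N}. \<forall>j\<le>J+1. 0 \<le> phat J x s0 c j n"
    and c_incr: "\<forall>n\<in>{1..<N}. \<forall>j\<in>{1..J}. c j n < c j (n+1)"
    and feas: "lp_feasible N J x a ell z"
  shows "0 \<le> lp_objective N J x s0 c z"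
proof -
  define P1 where "P1 n = claim_price J x s0 c n (\<lambda>j. e1 z j n)" for n
  define P2 where "P2 n = claim_price J x s0 c n (\<lambda>j. e2 z j n)" for n
  have "P1 N = 0" "P2 1 = 0"
    using feas by (simp_all add: P1_def P2_def lp_feasible_def claim_price_zero)
  have period: "0 \<le> P1 n + P2 (n+1)" if n: "n \<in> {1..<N}" for n
    unfolding P1_def P2_def
  proof (rule claim_price_pair_nonneg[OF J1])
    show "\<forall>j\<le>J. \<forall>k\<le>J. 0 \<le> e1 z j n + e2 z k (n+1) + (x k - x j) * d1 z j n"
      "\<forall>j\<le>J. 0 \<le> e2 z (J+1) (n+1) + d1 z j n" "0 \<le> e1 z (J+1) n + e2 z (J+1) (n+1)"
      using feas n unfolding lp_feasible_def by blast+
  qed (use n c0 phat_nonneg c_incr in \<open>auto intro: less_imp_le\<close>)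
  have "0 \<le> claim_price J x s0 c N (\<lambda>j. v z j N)"
    using feas phat_nonneg N1 unfolding lp_feasible_def claim_price_def
    by (intro sum_nonneg mult_nonneg_nonneg) auto
  moreover have "lp_objective N J x s0 c z =
      (\<Sum>n\<in>{1..<N}. P1 n + P2 (n+1)) + claim_price J x s0 c N (\<lambda>j. v z j N)"
    unfolding lp_objective_eq_claim_prices P1_def[symmetric] P2_def[symmetric] sum_shift_pairs[OF N1]
    using \<open>P1 N = 0\<close> \<open>P2 1 = 0\<close> by simp
  moreover have "0 \<le> (\<Sum>n\<in>{1..<N}. P1 n + P2 (n+1))"
    using period by (rule sum_nonneg)
  ultimately show ?thesis
    by simp
qed

end

section \<open>The super-replicating strategy\<close>

definition lp_claim :: "nat \<Rightarrow> lp_point \<Rightarrow> nat \<Rightarrow> nat \<Rightarrow> real" where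
  "lp_claim N z n j = e1 z j n + e2 z j n + (if n = N then v z j N else 0)"

definition lp_strategy :: "nat \<Rightarrow> nat \<Rightarrow> (nat \<Rightarrow> real) \<Rightarrow> lp_point \<Rightarrow> strategy" where
  "lp_strategy N J x z =
     \<lparr>bnd = (\<Sum>n=1..N. lp_claim N z n 0), stk = 0, cll = (\<lambda>j n. call_units J x (lp_claim N z n) j),
      dlt = (\<lambda>n w rho. if n < rho then dtilde1 J x z n (w n) else dtilde2 J x z n (w n))\<rparr>"

lemma sum_ge_telescope_after:
  fixes G V :: "nat \<Rightarrow> real"
  assumes rho: "rho \<in> {1..N}"
    and before: "\<And>n. n \<in> {1..<N} \<Longrightarrow> n < rho \<Longrightarrow> 0 \<le> G n"
    and after: "\<And>n. n \<in> {1..<N} \<Longrightarrow> rho \<le> n \<Longrightarrow> V n - V (n+1) \<le> G n"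
  shows "V rho - V N \<le> (\<Sum>n\<in>{1..<N}. G n)"
proof -
  have "V rho - V N = (\<Sum>n\<in>{rho..<N}. V n - V (Suc n))"
    using sum_Suc_diff'[of rho N "\<lambda>n. - V n"] rho by simp
  also have "\<dots> \<le> (\<Sum>n\<in>{rho..<N}. G n)"
    using after rho by (intro sum_mono) auto
  also have "\<dots> \<le> (\<Sum>n\<in>{1..<N}. G n)"
    using before rho by (intro sum_mono2) auto
  finally show ?thesis .
qed

lemma ext_interp_lp_claim:
  "ext_interp J x (lp_claim N z n) y = ext_interp J x (\<lambda>j. e1 z j n) y + ext_interp J x (\<lambda>j. e2 z j n) y
     + (if n = N then ext_interp J x (\<lambda>j. v z j N) y else 0)"
proof -
  have "lp_claim N z n = (\<lambda>j. (e1 z j n + e2 z j n) + (if n = N then v z j N else 0))"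
    by (simp add: lp_claim_def fun_eq_iff)
  then show ?thesis
    by (cases "n = N") (simp_all add: ext_interp_add)
qed

lemma claim_price_lp_claim:
  "claim_price J x s0 c n (lp_claim N z n) =
     claim_price J x s0 c n (\<lambda>j. e1 z j n) + claim_price J x s0 c n (\<lambda>j. e2 z j n)
     + (if n = N then claim_price J x s0 c N (\<lambda>j. v z j N) else 0)"
proof -
  have "lp_claim N z n = (\<lambda>j. (e1 z j n + e2 z j n) + (if n = N then v z j N else 0))"
    by (simp add: lp_claim_def fun_eq_iff)
  then show ?thesis
    by (cases "n = N") (simp_all add: claim_price_add claim_price_zero)
qed

context strike_grid
begin

lemma static_payoff_lp_strategy:
  assumes "N \<ge> 1" and w: "nonneg_path N w"
  shows "static_payoff N J x (lp_strategy N J x z) w =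
    (\<Sum>n = 1..N. ext_interp J x (\<lambda>j. e1 z j n) (w n) + ext_interp J x (\<lambda>j. e2 z j n) (w n))
    + ext_interp J x (\<lambda>j. v z j N) (w N)"
proof -
  have "static_payoff N J x (lp_strategy N J x z) w =
      (\<Sum>n=1..N. lp_claim N z n 0 + (\<Sum>j=0..J. call_units J x (lp_claim N z n) j * max (w n - x j) 0))"
    by (simp add: static_payoff_def lp_strategy_def sum.distrib)
  also have "\<dots> = (\<Sum>n=1..N. ext_interp J x (lp_claim N z n) (w n))"
    using w by (intro sum.cong) (auto simp: nonneg_path_def ext_interp_call_portfolio)
  finally show ?thesis
    using assms(1) by (simp add: ext_interp_lp_claim sum.distrib)
qed

lemma cost_lp_strategy:
  assumes "J \<ge> 1" and "N \<ge> 1" and c0: "\<forall>n\<in>{1..N}. c 0 n = s0"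
  shows "cost N J s0 c (lp_strategy N J x z) = lp_objective N J x s0 c z"
proof -
  have "cost N J s0 c (lp_strategy N J x z) =
      (\<Sum>n=1..N. lp_claim N z n 0 + (\<Sum>j=0..J. call_units J x (lp_claim N z n) j * c j n))"
    by (simp add: cost_def lp_strategy_def sum.distrib)
  also have "\<dots> = (\<Sum>n=1..N. claim_price J x s0 c n (lp_claim N z n))"
    using c0 by (intro sum.cong) (auto simp: claim_price_call_portfolio[where x=x, OF assms(1) x_0])
  finally show ?thesis
    using assms(2) by (simp add: claim_price_lp_claim lp_objective_eq_claim_prices sum.distrib)
qed

lemma mixed_interp_range:
  assumes "0 \<le> y"
  shows "mixed_interp J x d u dinf y \<in> d ` {..J} \<union> u ` {..<J} \<union> {dinf}"
  using assms
proof (cases rule: position_cases)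
  case (segment i)
  then show ?thesis
    by (auto simp: mixed_interp_segment)
qed (auto simp: mixed_interp_node mixed_interp_right)

lemma admissible_lp_strategy: "admissible_delta N (lp_strategy N J x z)"
proof -
  define ratios :: "(nat \<Rightarrow> real) \<Rightarrow> (nat \<Rightarrow> real) \<Rightarrow> real set" where "ratios d f =
      d ` {..J} \<union> (\<lambda>j. (f (j+1) - f j) / (x (j+1) - x j)) ` {..<J} \<union> {min (d J) (f (J+1))}"
    for d f
  define S where "S = (\<Union>n\<in>{1..<N}. ratios (\<lambda>j. d1 z j n) (\<lambda>j. e1 z j n)
      \<union> ratios (\<lambda>j. d2 z j n) (\<lambda>j. e1 z j n - v z j n))"
  have "finite S"
    by (simp add: S_def ratios_def)
  have ratio_mem: "hedge_ratio J x d f y \<in> ratios d f" if "0 \<le> y" for d f y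
    using mixed_interp_range[OF that] unfolding hedge_ratio_def ratios_def .
  have "dlt (lp_strategy N J x z) n w rho \<in> S" if n: "n \<in> {1..<N}" and "nonneg_path N w" for n w rho
  proof -
    have "0 \<le> w n"
      using that by (simp add: nonneg_path_def)
    then show ?thesis
      unfolding S_def by (intro UN_I[OF n])
        (simp add: lp_strategy_def dtilde1_eq_hedge_ratio dtilde2_eq_hedge_ratio ratio_mem)
  qed
  then have "\<bar>dlt (lp_strategy N J x z) n w rho\<bar> \<le> (\<Sum>s\<in>S. \<bar>s\<bar>)"
    if "n \<in> {1..<N}" "nonneg_path N w" for n w rho
    using member_le_sum[of _ S abs] \<open>finite S\<close> that by auto
  then have "\<exists>B. \<forall>n\<in>{1..<N}. \<forall>w rho. nonneg_path N w \<longrightarrow> rho \<in> {1..N} \<longrightarrow>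
      \<bar>dlt (lp_strategy N J x z) n w rho\<bar> \<le> B"
    by blast
  moreover have "\<forall>n\<in>{1..<N}. \<forall>w w' rho rho'.
      nonneg_path N w \<longrightarrow> nonneg_path N w' \<longrightarrow> rho \<in> {1..N} \<longrightarrow> rho' \<in> {1..N} \<longrightarrow>
      (\<forall>k\<in>{1..n}. w k = w' k) \<longrightarrow> (if rho \<le> n then rho' = rho else n < rho') \<longrightarrow>
      dlt (lp_strategy N J x z) n w rho = dlt (lp_strategy N J x z) n w' rho'"
    by (auto simp: lp_strategy_def split: if_splits)
  ultimately show ?thesis
    unfolding admissible_delta_def by blast
qed

lemma lp_period_hedge_before_exercise:
  assumes feas: "lp_feasible N J x a ell z" and n: "n \<in> {1..<N}" and "0 \<le> y" "0 \<le> y'"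
  shows "0 \<le> ext_interp J x (\<lambda>j. e1 z j n) y + ext_interp J x (\<lambda>j. e2 z j (n+1)) y'
    + dtilde1 J x z n y * (y' - y)"
  unfolding dtilde1_eq_hedge_ratio
proof (rule one_period_hedge)
  show "\<forall>j\<le>J. \<forall>k\<le>J. 0 \<le> e1 z j n + e2 z k (n+1) + (x k - x j) * d1 z j n"
    "\<forall>j\<le>J. 0 \<le> e2 z (J+1) (n+1) + d1 z j n" "0 \<le> e1 z (J+1) n + e2 z (J+1) (n+1)"
    using feas n unfolding lp_feasible_def by blast+
qed (use assms in auto)

text \<open>After exercise the holdings must also carry the value \<open>ext_interp J x v\<close> from one date to
  the next: constraints (iii) are constraints (ii) for \<open>e1 - v\<close> and \<open>e2 + v\<close>.\<close>
lemma lp_period_hedge_after_exercise: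
  assumes feas: "lp_feasible N J x a ell z" and n: "n \<in> {1..<N}" and "0 \<le> y" "0 \<le> y'"
  shows "ext_interp J x (\<lambda>j. v z j n) y - ext_interp J x (\<lambda>j. v z j (n+1)) y' \<le>
    ext_interp J x (\<lambda>j. e1 z j n) y + ext_interp J x (\<lambda>j. e2 z j (n+1)) y'
    + dtilde2 J x z n y * (y' - y)"
proof -
  have "0 \<le> ext_interp J x (\<lambda>j. e1 z j n - v z j n) y + ext_interp J x (\<lambda>j. e2 z j (n+1) + v z j (n+1)) y'
      + dtilde2 J x z n y * (y' - y)"
    unfolding dtilde2_eq_hedge_ratio
  proof (rule one_period_hedge)
    have "\<forall>j\<le>J. \<forall>k\<le>J.
        0 \<le> e1 z j n + e2 z k (n+1) + (x k - x j) * d2 z j n - v z j n + v z k (n+1)"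
      "\<forall>j\<le>J. 0 \<le> e2 z (J+1) (n+1) + d2 z j n + v z (J+1) (n+1)"
      "0 \<le> e1 z (J+1) n + e2 z (J+1) (n+1) - v z (J+1) n + v z (J+1) (n+1)"
      using feas n unfolding lp_feasible_def by blast+
    then show "\<forall>j\<le>J. \<forall>k\<le>J.
        0 \<le> (e1 z j n - v z j n) + (e2 z k (n+1) + v z k (n+1)) + (x k - x j) * d2 z j n"
      "\<forall>j\<le>J. 0 \<le> (e2 z (J+1) (n+1) + v z (J+1) (n+1)) + d2 z j n"
      "0 \<le> (e1 z (J+1) n - v z (J+1) n) + (e2 z (J+1) (n+1) + v z (J+1) (n+1))"
      by (simp_all add: algebra_simps)
  qed (use assms in auto)
  then show ?thesis
    by (simp add: ext_interp_add ext_interp_diff)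
qed

lemma lp_strategy_payoff_by_periods:
  assumes N1: "N \<ge> 1" and feas: "lp_feasible N J x a ell z" and w: "nonneg_path N w"
  shows "static_payoff N J x (lp_strategy N J x z) w + gains N (lp_strategy N J x z) w rho =
    (\<Sum>n\<in>{1..<N}. ext_interp J x (\<lambda>j. e1 z j n) (w n) + ext_interp J x (\<lambda>j. e2 z j (n+1)) (w (n+1))
       + dlt (lp_strategy N J x z) n w rho * (w (n+1) - w n))
    + ext_interp J x (\<lambda>j. v z j N) (w N)"
proof -
  have "ext_interp J x (\<lambda>j. e1 z j N) (w N) = 0" "ext_interp J x (\<lambda>j. e2 z j 1) (w 1) = 0"
    using feas N1 w by (auto simp: lp_feasible_def nonneg_path_def intro!: ext_interp_zero)
  then show ?thesis
    unfolding static_payoff_lp_strategy[OF N1 w] gains_def sum_shift_pairs[OF N1]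
    by (simp add: sum.distrib)
qed

lemma lp_strategy_superhedges:
  assumes N1: "N \<ge> 1"
    and a_convex: "\<forall>n\<in>{1..N}. convex_on {0..} (\<lambda>y. a y n)"
    and ell_lim: "\<forall>n\<in>{1..N}. ((\<lambda>y. a y n / y) \<longlongrightarrow> ell n) at_top"
    and feas: "lp_feasible N J x a ell z"
  shows "lp_strategy N J x z \<in> superhedges N J x a"
proof -
  have "a (w rho) rho \<le> static_payoff N J x (lp_strategy N J x z) w + gains N (lp_strategy N J x z) w rho"
    if w: "nonneg_path N w" and rho: "rho \<in> {1..N}" for w rho
  proof -
    have w_nonneg: "0 \<le> w n" if "n \<in> {1..N}" for n
      using w that by (simp add: nonneg_path_def)
    define V where "V n = ext_interp J x (\<lambda>j. v z j n) (w n)" for n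
    define G where "G n = ext_interp J x (\<lambda>j. e1 z j n) (w n) + ext_interp J x (\<lambda>j. e2 z j (n+1)) (w (n+1))
      + dlt (lp_strategy N J x z) n w rho * (w (n+1) - w n)" for n
    have "V rho - V N \<le> (\<Sum>n\<in>{1..<N}. G n)"
    proof (rule sum_ge_telescope_after[OF rho])
      show "0 \<le> G n" if "n \<in> {1..<N}" "n < rho" for n
        using lp_period_hedge_before_exercise[OF feas that(1)] w_nonneg that
        by (simp add: G_def lp_strategy_def)
      show "V n - V (n+1) \<le> G n" if "n \<in> {1..<N}" "rho \<le> n" for n
        using lp_period_hedge_after_exercise[OF feas that(1)] w_nonneg that
        by (simp add: G_def V_def lp_strategy_def)
    qed
    moreover have "a (w rho) rho \<le> V rho"
      unfolding V_def
    proof (rule convex_le_ext_interp)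
      show "\<forall>j\<le>J. a (x j) rho \<le> v z j rho" "ell rho \<le> v z (J+1) rho"
        using feas rho unfolding lp_feasible_def by blast+
    qed (use a_convex ell_lim rho w_nonneg in auto)
    ultimately show ?thesis
      unfolding lp_strategy_payoff_by_periods[OF N1 feas w] G_def[symmetric] V_def[symmetric]
      by linarith
  qed
  then show ?thesis
    unfolding superhedges_def using admissible_lp_strategy by blast
qed

lemma lp_strategy_spec:
  assumes J1: "J \<ge> 1" and N1: "N \<ge> 1" and c0: "\<forall>n\<in>{1..N}. c 0 n = s0"
    and a_convex: "\<forall>n\<in>{1..N}. convex_on {0..} (\<lambda>y. a y n)"
    and ell_lim: "\<forall>n\<in>{1..N}. ((\<lambda>y. a y n / y) \<longlongrightarrow> ell n) at_top"
    and feas: "lp_feasible N J x a ell z"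
  shows "lp_strategy N J x z \<in> superhedges N J x a \<and>
      (\<forall>w. nonneg_path N w \<longrightarrow> static_payoff N J x (lp_strategy N J x z) w =
        (\<Sum>n = 1..N. ext_interp J x (\<lambda>j. e1 z j n) (w n) + ext_interp J x (\<lambda>j. e2 z j n) (w n))
        + ext_interp J x (\<lambda>j. v z j N) (w N)) \<and>
      (\<forall>n \<in> {1..<N}. \<forall>w rho. nonneg_path N w \<longrightarrow> rho \<in> {1..N} \<longrightarrow>
        dlt (lp_strategy N J x z) n w rho =
          (if n < rho then dtilde1 J x z n (w n) else dtilde2 J x z n (w n))) \<and>
      cost N J s0 c (lp_strategy N J x z) = lp_objective N J x s0 c z"
  using lp_strategy_superhedges[OF N1 a_convex ell_lim feas] static_payoff_lp_strategy[OF N1]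
    cost_lp_strategy[where N=N and c=c, OF J1 N1 c0]
  by (intro conjI) (auto simp: lp_strategy_def)

end

theorem mainTheorem12:
  fixes N J :: nat and t x :: "nat \<Rightarrow> real" and s0 R :: real
    and c :: "nat \<Rightarrow> nat \<Rightarrow> real" and a :: "real \<Rightarrow> nat \<Rightarrow> real" and ell :: "nat \<Rightarrow> real"
  assumes N1: "N \<ge> 1" and J1: "J \<ge> 1"
    and t0: "t 0 = 0" and t_mono: "\<forall>n < N. t n < t (n+1)"
    and s0_pos: "s0 > 0"
    and x0: "x 0 = 0" and x_mono: "\<forall>j < J. x j < x (j+1)"
    and c0: "\<forall>n \<in> {1..N}. c 0 n = s0"
    and c_decr: "\<forall>n \<in> {1..N}. \<forall>j < J. c (j+1) n < c j n"
    and cJ_pos: "\<forall>n \<in> {1..N}. c J n > 0"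
    and slope0: "\<forall>n \<in> {1..N}. (c 0 n - c 1 n) / x 1 < 1"
    and slope_decr: "\<forall>n \<in> {1..N}. \<forall>j. j + 1 < J \<longrightarrow>
        (c (j+1) n - c (j+2) n) / (x (j+2) - x (j+1)) < (c j n - c (j+1) n) / (x (j+1) - x j)"
    and slopeJ: "\<forall>n \<in> {1..N}. (c (J-1) n - c J n) / (x J - x (J-1)) > 0"
    and c_incr: "\<forall>n \<in> {1..<N}. \<forall>j \<in> {1..J}. c j n < c j (n+1)"
    and a_nonneg: "\<forall>n \<in> {1..N}. \<forall>y \<ge> 0. a y n \<ge> 0"
    and a_convex: "\<forall>n \<in> {1..N}. convex_on {0..} (\<lambda>y. a y n)"
    and ell_lim: "\<forall>n \<in> {1..N}. ((\<lambda>y. a y n / y) \<longlongrightarrow> ell n) at_top"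
    and ell_R: "\<forall>n \<in> {1..N}. ell n < R"
  shows
    "(\<exists>z. lp_feasible N J x a ell z \<and>
          lp_objective N J x s0 c z = lp_value N J x s0 c a ell \<and>
          (\<forall>z'. lp_feasible N J x a ell z' \<longrightarrow> lp_objective N J x s0 c z \<le> lp_objective N J x s0 c z'))
     \<and>
     (\<forall>z. lp_feasible N J x a ell z \<longrightarrow>
        (\<exists>s \<in> superhedges N J x a.
           (\<forall>w. nonneg_path N w \<longrightarrow>
              static_payoff N J x s w =
                (\<Sum>n = 1..N. ext_interp J x (\<lambda>j. e1 z j n) (w n) + ext_interp J x (\<lambda>j. e2 z j n) (w n))
                + ext_interp J x (\<lambda>j. v z j N) (w N)) \<and>
           (\<forall>n \<in> {1..<N}. \<forall>w rho. nonneg_path N w \<longrightarrow> rho \<in> {1..N} \<longrightarrow>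
              dlt s n w rho = (if n < rho then dtilde1 J x z n (w n) else dtilde2 J x z n (w n))) \<and>
           cost N J s0 c s = lp_objective N J x s0 c z))
     \<and>
     (INF s \<in> superhedges N J x a. ereal (cost N J s0 c s)) \<le> ereal (lp_value N J x s0 c a ell)"
proof -
  interpret strike_grid J x
    using x0 x_mono by unfold_locales
  have "\<forall>n\<in>{1..N}. \<forall>j\<le>J+1. 0 \<le> phat J x s0 c j n"
    using phat_nonneg[OF J1] c0 slope0 slope_decr slopeJ cJ_pos by blast
  then have "\<exists>z. lp_feasible N J x a ell z \<and>
    (\<forall>z'. lp_feasible N J x a ell z' \<longrightarrow> lp_objective N J x s0 c z \<le> lp_objective N J x s0 c z')"
    using lp_optimum_exists[OF lp_feasible_exists[OF a_nonneg]] lp_objective_nonneg[OF J1 N1 c0 _ c_incr]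
    by blast
  then obtain z where z: "lp_feasible N J x a ell z"
    "\<forall>z'. lp_feasible N J x a ell z' \<longrightarrow> lp_objective N J x s0 c z \<le> lp_objective N J x s0 c z'"
    by blast
  have optimal_value: "lp_objective N J x s0 c z = lp_value N J x s0 c a ell"
    unfolding lp_value_def using z by (intro cInf_eq_minimum[symmetric]) auto
  note hedges = lp_strategy_spec[where N=N and c=c and a=a, OF J1 N1 c0 a_convex ell_lim]
  have "(INF s \<in> superhedges N J x a. ereal (cost N J s0 c s)) \<le> ereal (cost N J s0 c (lp_strategy N J x z))"
    using hedges[OF z(1)] by (blast intro: INF_lower)
  then have "(INF s \<in> superhedges N J x a. ereal (cost N J s0 c s)) \<le> ereal (lp_value N J x s0 c a ell)"
    using hedges[OF z(1)] optimal_value by simp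
  then show ?thesis
    using z optimal_value hedges by blast
qed

end
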